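(* Let $\lambda\approx1.5214$ be the real root and $\mu\approx-0.761+0.858i$ a complex root of $t^3-t-2$, and put $\sigma=\log_{|\mu|}\lambda\approx3.068$. Let $\mathbf Q=\bigoplus\mathbf Q_{n_1n_2n_3}$ be the $\mathbb N_0^3$-grading of $\mathbf Q=\mathrm{Lie}(v_0,v_1,v_2)$ by multidegree in $v_0,v_1,v_2$. For $(n_1,n_2,n_3)$ put $Y_1=n_1+n_2\lambda+n_3\lambda^2$, $Y_2=\operatorname{Re}(n_1+n_2\mu+n_3\mu^2)$, $Y_3=\operatorname{Im}(n_1+n_2\mu+n_3\mu^2)$. Then for every $(n_1,n_2,n_3)$ with $\mathbf Q_{n_1n_2n_3}\neq0$ (i.e. for the multidegree of every standard monomial of $\mathbf Q$), $$\sqrt{Y_2^2+Y_3^2}<14\,Y_1^{1/\sigma}.$$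
   Context: $\Lambda$ is the Grassmann algebra over a field $K$ on odd generators $x_0,x_1,\dots$; $x_i$ acts by left multiplication; $\partial_i$ is the odd superderivation with $\partial_i(x_j)=\delta_{ij}$; pivot elements $v_i=\sum_{k\ge0}\big(\prod_{n=0}^{k-1}x_{i+3n}x_{i+3n+1}\big)\partial_{i+3k}$. $\mathbf Q$ is the Lie subsuperalgebra of $(\operatorname{End}\Lambda)^{(-)}$ generated by $v_0,v_1,v_2$ (closed under squaring of odd elements in characteristic $2$); $\mathbf Q_{n_1n_2n_3}$ is the span of Lie products with $n_1,n_2,n_3$ occurrences of $v_0,v_1,v_2$. *)

theory Defs
  imports Complex_Main
begin

text \<open>An element of the Grassmann algebra is represented by its coefficient function
  on the standard basis monomials x_S = x_{i1} ... x_{ik} (S = {i1 < ... < ik} finite).\<close>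

type_synonym 'k grass = "nat set \<Rightarrow> 'k"
type_synonym 'k gop = "'k grass \<Rightarrow> 'k grass"

definition Lambda :: "'k::field grass set" where
  "Lambda = {f. finite {S. f S \<noteq> 0} \<and> (\<forall>S. f S \<noteq> 0 \<longrightarrow> finite S)}"

definition gsign :: "nat \<Rightarrow> nat set \<Rightarrow> 'k::field" where
  "gsign i S = (-1) ^ card {j \<in> S. j < i}"

text \<open>Left multiplication by x_i: x_i x_S = (-1)^{#{j in S. j<i}} x_{S+i} if i not in S, else 0.\<close>
definition xmul :: "nat \<Rightarrow> 'k::field gop" where
  "xmul i f = (\<lambda>T. if i \<in> T then gsign i (T - {i}) * f (T - {i}) else 0)"

text \<open>Odd superderivation d_i with d_i(x_j) = delta_ij:
  d_i x_S = (-1)^{#{j in S. j<i}} x_{S-i} if i in S, else 0.\<close>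
definition dder :: "nat \<Rightarrow> 'k::field gop" where
  "dder i f = (\<lambda>T. if i \<notin> T then gsign i T * f (T \<union> {i}) else 0)"

definition pivot_term :: "nat \<Rightarrow> nat \<Rightarrow> 'k::field gop" where
  "pivot_term i k f =
     foldr (\<lambda>n g. xmul (i + 3*n) (xmul (i + 3*n + 1) g)) [0..<k] (dder (i + 3*k) f)"

text \<open>Pivot element v_i = sum_k (prod_{n<k} x_{i+3n} x_{i+3n+1}) d_{i+3k}; on each element of
  Lambda only finitely many summands are nonzero (those with d_{i+3k} f \<noteq> 0).\<close>
definition pivot :: "nat \<Rightarrow> 'k::field gop" where
  "pivot i f = (\<lambda>T. \<Sum>k\<in>{k. dder (i + 3*k) f \<noteq> (\<lambda>T. 0)}. pivot_term i k f T)"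

text \<open>Triples (operator, multidegree (n1,n2,n3), odd?) for Lie products in the generators
  v_0, v_1, v_2 of the Lie superalgebra (End Lambda)^(-); superbracket
  [a,b] = ab - (-1)^{|a||b|} ba; in characteristic 2 also squares of odd elements.\<close>

definition deg_unit :: "nat \<Rightarrow> nat \<times> nat \<times> nat" where
  "deg_unit i = (if i = 0 then (1,0,0) else if i = 1 then (0,1,0) else (0,0,1))"

definition deg_add :: "nat \<times> nat \<times> nat \<Rightarrow> nat \<times> nat \<times> nat \<Rightarrow> nat \<times> nat \<times> nat" where
  "deg_add d e = (case d of (a1,a2,a3) \<Rightarrow> case e of (b1,b2,b3) \<Rightarrow> (a1+b1, a2+b2, a3+b3))"

definition superbracket :: "'k::field gop \<Rightarrow> bool \<Rightarrow> 'k gop \<Rightarrow> bool \<Rightarrow> 'k gop" where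
  "superbracket a pa b pb =
     (\<lambda>f. if pa \<and> pb then (\<lambda>T. a (b f) T + b (a f) T) else (\<lambda>T. a (b f) T - b (a f) T))"

inductive_set lie_prod :: "('k::field gop \<times> (nat \<times> nat \<times> nat) \<times> bool) set" where
  gen: "i < 3 \<Longrightarrow> (pivot i, deg_unit i, True) \<in> lie_prod"
| brk: "(a, da, pa) \<in> lie_prod \<Longrightarrow> (b, db, pb) \<in> lie_prod \<Longrightarrow>
        (superbracket a pa b pb, deg_add da db, pa \<noteq> pb) \<in> lie_prod"
| sq: "(2::'k) = 0 \<Longrightarrow> (a, d, True) \<in> lie_prod \<Longrightarrow>
        ((\<lambda>f. a (a f)), deg_add d d, False) \<in> lie_prod"

inductive_set Qcomp :: "nat \<times> nat \<times> nat \<Rightarrow> 'k::field gop set" for n where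
  zero: "(\<lambda>f T. 0) \<in> Qcomp n"
| prod: "(a, n, p) \<in> lie_prod \<Longrightarrow> a \<in> Qcomp n"
| add: "a \<in> Qcomp n \<Longrightarrow> b \<in> Qcomp n \<Longrightarrow> (\<lambda>f T. a f T + b f T) \<in> Qcomp n"
| smult: "a \<in> Qcomp n \<Longrightarrow> (\<lambda>f T. c * a f T) \<in> Qcomp n"

definition Qcomp_nonzero :: "'k::field itself \<Rightarrow> nat \<times> nat \<times> nat \<Rightarrow> bool" where
  "Qcomp_nonzero TYPE('k) n = (\<exists>a \<in> (Qcomp n :: 'k gop set). \<exists>f \<in> Lambda. a f \<noteq> (\<lambda>T. 0))"

definition lam :: real where
  "lam = (THE t. t ^ 3 - t - 2 = 0)"

definition mu :: complex where
  "mu = (THE z. z ^ 3 - z - 2 = 0 \<and> Im z > 0)"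

definition sigma :: real where
  "sigma = log (cmod mu) lam"

end

theory Submission
  imports Defs
begin

text \<open>Every Lie product a of v_0, v_1, v_2 is a linear superderivation of Lambda. Hence it vanishes
  on Lambda unless it is nonzero on some generator x_j, and by Leibniz' rule every monomial x_S
  occurring in a(x_j) arises by repeatedly substituting the index set of a pivot term,
  x_(i+3k) \<mapsto> x_i x_(i+1) x_(i+3) x_(i+4) ... x_(i+3k-2), for a single index. Such sets S consist of
  a block of pairs m, m+1, m+3, m+4, ... ending just below j, above a sparse head X below m.
  For every root x of t^3 = t + 2 the weight x^j - (\<Sum>i\<in>S. x^i) is additive under substitution
  and equals x^i on the terms of v_i, so it equals n1 + n2 x + n3 x^2 for a product of multidegree
  (n1, n2, n3); it also equals x^m - (\<Sum>i\<in>X. x^i). As X is sparse, this is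
  at least lam^m / 8 for x = lam and at most 7 |mu|^m in modulus for x = mu, and
  lam powr (1 / sigma) = |mu| turns these two estimates into the claim.\<close>

section \<open>The Grassmann product\<close>

definition gsupp :: "'k::field grass \<Rightarrow> nat set set" where
  "gsupp f = {S. f S \<noteq> 0}"

definition gbasis :: "nat set \<Rightarrow> 'k::field grass" where
  "gbasis X = (\<lambda>S. if S = X then 1 else 0)"

definition psign :: "bool \<Rightarrow> 'k::field" where
  "psign q = (if q then -1 else 1)"

definition homogeneous :: "bool \<Rightarrow> 'k::field grass \<Rightarrow> bool" where
  "homogeneous q f \<longleftrightarrow> (\<forall>S. f S \<noteq> 0 \<longrightarrow> odd (card S) = q)"

definition inversions :: "nat set \<Rightarrow> nat set \<Rightarrow> nat" where
  "inversions A B = (\<Sum>a\<in>A. card {b\<in>B. b < a})"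

definition merge_sign :: "nat set \<Rightarrow> nat set \<Rightarrow> 'k::field" where
  "merge_sign A B = (-1) ^ inversions A B"

text \<open>For disjoint A and B, x_A x_B = merge_sign A B x_(A \<union> B): the sign counts the transpositions
  needed to sort the factors.\<close>
definition gmul :: "'k::field grass \<Rightarrow> 'k grass \<Rightarrow> 'k grass" where
  "gmul f g = (\<lambda>T. \<Sum>A\<in>Pow T. merge_sign A (T - A) * f A * g (T - A))"

lemma psign_sq [simp]: "psign q * psign q = (1::'k::field)"
  unfolding psign_def by simp

lemma gsign_Un:
  assumes "A \<inter> B = {}"
  shows "gsign j (A \<union> B) = (gsign j A * gsign j B :: 'k::field)"
proof -
  have "{x\<in>A \<union> B. x < j} = {x\<in>A. x < j} \<union> {x\<in>B. x < j}" by auto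
  then have "card {x\<in>A \<union> B. x < j} = card {x\<in>A. x < j} + card {x\<in>B. x < j}"
    using assms by (simp add: card_Un_disjoint disjoint_iff)
  then show ?thesis unfolding gsign_def by (simp add: power_add)
qed

lemma gsign_Diff:
  assumes "A \<subseteq> T"
  shows "gsign j T = (gsign j A * gsign j (T - A) :: 'k::field)"
  using gsign_Un[of A "T - A" j] assms by (simp add: Un_absorb1)

lemma gsign_sq [simp]: "gsign j A * gsign j A = (1::'k::field)"
  "gsign j A * (gsign j A * x) = (x::'k::field)"
  unfolding gsign_def by simp_all

lemma merge_sign_empty [simp]: "merge_sign {} B = 1" "merge_sign A {} = 1"
  unfolding merge_sign_def inversions_def by simp_all

lemma merge_sign_insert_left:
  assumes "finite A" "a \<notin> A"
  shows "merge_sign (insert a A) B = (gsign a B * merge_sign A B :: 'k::field)"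
  using assms unfolding merge_sign_def gsign_def inversions_def by (simp add: power_add)

lemma merge_sign_insert_right:
  assumes "finite A" "a \<notin> B"
  shows "merge_sign A (insert a B) = ((-1) ^ card {x\<in>A. a < x} * merge_sign A B :: 'k::field)"
proof -
  have "card {b\<in>insert a B. b < x} = (if a < x then 1 else 0) + card {b\<in>B. b < x}" for x
  proof (cases "a < x")
    case True
    then have "{b\<in>insert a B. b < x} = insert a {b\<in>B. b < x}" by auto
    then show ?thesis using True assms(2) by simp
  next
    case False
    then have "{b\<in>insert a B. b < x} = {b\<in>B. b < x}" by auto
    then show ?thesis using False by simp
  qed
  then have "inversions A (insert a B) = (\<Sum>x\<in>A. if a < x then 1 else 0) + inversions A B"
    unfolding inversions_def by (simp add: sum.distrib)
  also have "(\<Sum>x\<in>A. if a < x then 1 else 0) = card {x\<in>A. a < x}"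
    using assms(1) by (simp add: sum.If_cases Int_def)
  finally show ?thesis unfolding merge_sign_def by (simp add: power_add)
qed

lemma gsign_mult_sign_greater:
  assumes "finite A" "j \<notin> A"
  shows "gsign j A * (-1) ^ card {x\<in>A. j < x} = ((-1) ^ card A :: 'k::field)"
proof -
  have "A = {x\<in>A. x < j} \<union> {x\<in>A. j < x}" using assms(2) by (force simp: not_less_iff_gr_or_eq)
  then have "card A = card {x\<in>A. x < j} + card {x\<in>A. j < x}"
    using assms(1) by (metis (no_types, lifting) card_Un_disjoint disjoint_iff finite_Un mem_Collect_eq
        order_less_asym)
  then show ?thesis unfolding gsign_def by (simp add: power_add)
qed

lemma homogeneous_sign:
  fixes f :: "'k::field grass"
  shows "homogeneous q f \<Longrightarrow> f S \<noteq> 0 \<Longrightarrow> (-1) ^ card S = (psign q :: 'k)"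
  unfolding homogeneous_def psign_def by auto

lemma sum_Pow_insert:
  assumes "finite T" "a \<notin> T"
  shows "(\<Sum>A\<in>Pow (insert a T). h A) = (\<Sum>A\<in>Pow T. h A) + (\<Sum>A\<in>Pow T. h (insert a A))"
proof -
  have "inj_on (insert a) (Pow T)"
    using assms(2) unfolding inj_on_def by (metis PowD insert_ident subset_iff)
  moreover have "Pow T \<inter> insert a ` Pow T = {}" using assms(2) by auto
  ultimately show ?thesis
    unfolding Pow_insert using assms(1) by (simp add: sum.union_disjoint sum.reindex)
qed

text \<open>Splits the product according to which factor contains x_a.\<close>
lemma gmul_insert:
  assumes "finite T" "a \<notin> T"
  shows "gmul f g (insert a T) =
           (\<Sum>A\<in>Pow T. (-1) ^ card {x\<in>A. a < x} * merge_sign A (T - A) * f A * g (insert a (T - A)))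
         + (\<Sum>A\<in>Pow T. gsign a (T - A) * merge_sign A (T - A) * f (insert a A) * g (T - A))"
proof -
  have "insert a T - A = insert a (T - A)" "a \<notin> T - A" "finite A" if "A \<in> Pow T" for A
    using that assms finite_subset by auto
  moreover have "insert a T - insert a A = T - A" "a \<notin> A" if "A \<in> Pow T" for A
    using that assms by auto
  ultimately show ?thesis
    unfolding gmul_def sum_Pow_insert[OF assms]
    by (intro arg_cong2[where f = "(+)"] sum.cong)
       (simp_all add: merge_sign_insert_left merge_sign_insert_right)
qed

lemma gmul_infinite: "infinite T \<Longrightarrow> gmul f g T = 0"
  unfolding gmul_def by simp

lemma xmul_gmul_left: "xmul a (gmul u g) = gmul (xmul a u) g"
proof
  fix T
  show "xmul a (gmul u g) T = gmul (xmul a u) g T"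
  proof (cases "finite T \<and> a \<in> T")
    case True
    define T0 where "T0 = T - {a}"
    have T: "T = insert a T0" "a \<notin> T0" "finite T0" using True unfolding T0_def by auto
    have "xmul a (gmul u g) T = (\<Sum>A\<in>Pow T0. gsign a T0 * (merge_sign A (T0 - A) * u A * g (T0 - A)))"
      using T by (simp add: xmul_def gmul_def sum_distrib_left)
    also have "\<dots> = (\<Sum>A\<in>Pow T0. gsign a (T0 - A) * merge_sign A (T0 - A) * xmul a u (insert a A) * g (T0 - A))"
    proof (rule sum.cong[OF refl])
      fix A assume A: "A \<in> Pow T0"
      then have "a \<notin> A" using T by auto
      then show "gsign a T0 * (merge_sign A (T0 - A) * u A * g (T0 - A))
          = gsign a (T0 - A) * merge_sign A (T0 - A) * xmul a u (insert a A) * g (T0 - A)"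
        using A by (simp add: xmul_def gsign_Diff[of A T0])
    qed
    also have "\<dots> = gmul (xmul a u) g T"
    proof -
      have "xmul a u A = 0" if "A \<in> Pow T0" for A
        using that T by (auto simp: xmul_def)
      then show ?thesis unfolding T(1) gmul_insert[OF T(3,2)] by simp
    qed
    finally show ?thesis .
  next
    case False
    then show ?thesis by (auto simp: xmul_def gmul_def intro!: sum.neutral)
  qed
qed

lemma homogeneous_sign_split:
  fixes f :: "'k::field grass"
  assumes "homogeneous q f" "f A \<noteq> 0" "finite A" "a \<notin> A"
  shows "psign q * (-1) ^ card {x\<in>A. a < x} = (gsign a A :: 'k)"
proof -
  have "psign q = (gsign a A * (-1) ^ card {x\<in>A. a < x} :: 'k)"
    using homogeneous_sign[OF assms(1,2)] gsign_mult_sign_greater[where 'k = 'k, OF assms(3,4)] by simp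
  then show ?thesis by (simp flip: power_add mult_2 add: mult.assoc)
qed

lemma xmul_gmul_right:
  fixes f :: "'k::field grass"
  assumes f: "homogeneous q f"
  shows "xmul a (gmul f w) = (\<lambda>T. psign q * gmul f (xmul a w) T)"
proof
  fix T
  show "xmul a (gmul f w) T = psign q * gmul f (xmul a w) T"
  proof (cases "finite T \<and> a \<in> T")
    case True
    define T0 where "T0 = T - {a}"
    have T: "T = insert a T0" "a \<notin> T0" "finite T0" using True unfolding T0_def by auto
    have "xmul a (gmul f w) T = (\<Sum>A\<in>Pow T0. gsign a T0 * (merge_sign A (T0 - A) * f A * w (T0 - A)))"
      using T by (simp add: xmul_def gmul_def sum_distrib_left)
    also have "\<dots> = psign q * (\<Sum>A\<in>Pow T0.
        (-1) ^ card {x\<in>A. a < x} * merge_sign A (T0 - A) * f A * xmul a w (insert a (T0 - A)))"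
      unfolding sum_distrib_left
    proof (rule sum.cong[OF refl])
      fix A assume A: "A \<in> Pow T0"
      then have A': "finite A" "a \<notin> A" "a \<notin> T0 - A" using T finite_subset by auto
      show "gsign a T0 * (merge_sign A (T0 - A) * f A * w (T0 - A)) = psign q *
          ((-1) ^ card {x\<in>A. a < x} * merge_sign A (T0 - A) * f A * xmul a w (insert a (T0 - A)))"
      proof (cases "f A = 0")
        case False
        have "gsign a A = (psign q * (-1) ^ card {x\<in>A. a < x} :: 'k)"
          using homogeneous_sign_split[OF f False A'(1,2)] by simp
        then show ?thesis
          using A A'(3) by (simp add: xmul_def gsign_Diff[of A T0] mult_ac)
      qed simp
    qed
    also have "\<dots> = psign q * gmul f (xmul a w) T"
    proof -
      have "xmul a w (T0 - A) = 0" if "A \<in> Pow T0" for A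
        using T by (auto simp: xmul_def)
      then show ?thesis unfolding T(1) gmul_insert[OF T(3,2)] by simp
    qed
    finally show ?thesis .
  next
    case False
    then show ?thesis by (auto simp: xmul_def gmul_def intro!: sum.neutral)
  qed
qed

lemma dder_gmul_notin:
  fixes f :: "'k::field grass"
  assumes f: "homogeneous q f" and T: "finite T" "j \<notin> T"
  shows "dder j (gmul f g) T = gmul (dder j f) g T + psign q * gmul f (dder j g) T"
proof -
  have "dder j (gmul f g) T = gsign j T * gmul f g (insert j T)"
    using T by (simp add: dder_def)
  also have "\<dots> = psign q * gmul f (dder j g) T + gmul (dder j f) g T"
    unfolding gmul_insert[OF T] distrib_left
  proof (rule arg_cong2[where f = "(+)"])
    show "gsign j T * (\<Sum>A\<in>Pow T. (-1) ^ card {x\<in>A. j < x} * merge_sign A (T - A) * f A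
          * g (insert j (T - A))) = psign q * gmul f (dder j g) T"
      unfolding gmul_def sum_distrib_left
    proof (rule sum.cong[OF refl])
      fix A assume A: "A \<in> Pow T"
      then have A': "finite A" "j \<notin> A" "j \<notin> T - A" using T finite_subset by auto
      show "gsign j T * ((-1) ^ card {x\<in>A. j < x} * merge_sign A (T - A) * f A * g (insert j (T - A)))
          = psign q * (merge_sign A (T - A) * f A * dder j g (T - A))"
      proof (cases "f A = 0")
        case False
        have "gsign j A = (psign q * (-1) ^ card {x\<in>A. j < x} :: 'k)"
          using homogeneous_sign_split[OF f False A'(1,2)] by simp
        then show ?thesis using A A'(3) by (simp add: dder_def gsign_Diff[of A T] mult_ac)
      qed simp
    qed
    show "gsign j T * (\<Sum>A\<in>Pow T. gsign j (T - A) * merge_sign A (T - A) * f (insert j A) * g (T - A))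
        = gmul (dder j f) g T"
      unfolding gmul_def sum_distrib_left
    proof (rule sum.cong[OF refl])
      fix A assume A: "A \<in> Pow T"
      then have "j \<notin> A" using T by auto
      then show "gsign j T * (gsign j (T - A) * merge_sign A (T - A) * f (insert j A) * g (T - A))
          = merge_sign A (T - A) * dder j f A * g (T - A)"
        using A by (simp add: dder_def gsign_Diff[of A T] mult_ac)
    qed
  qed
  finally show ?thesis by (simp add: add.commute)
qed

lemma gmul_dder_insert_cancel:
  fixes f :: "'k::field grass"
  assumes f: "homogeneous q f" and T: "finite T" "j \<notin> T"
  shows "gmul (dder j f) g (insert j T) + psign q * gmul f (dder j g) (insert j T) = 0"
proof -
  have "gmul (dder j f) g (insert j T) = (\<Sum>A\<in>Pow T. (-1) ^ card {x\<in>A. j < x} * merge_sign A (T - A)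
      * (gsign j A * f (insert j A)) * g (insert j (T - A)))"
    unfolding gmul_insert[OF T] using T by (auto simp: dder_def intro!: sum.cong)
  also have "\<dots> = (\<Sum>A\<in>Pow T. (-1) ^ card A * merge_sign A (T - A) * f (insert j A) * g (insert j (T - A)))"
  proof (rule sum.cong[OF refl])
    fix A assume A: "A \<in> Pow T"
    then have A': "finite A" "j \<notin> A" using T finite_subset by auto
    show "(-1) ^ card {x\<in>A. j < x} * merge_sign A (T - A) * (gsign j A * f (insert j A))
        * g (insert j (T - A)) = (-1) ^ card A * merge_sign A (T - A) * f (insert j A) * g (insert j (T - A))"
      using gsign_mult_sign_greater[where 'k = 'k, OF A'] by (simp add: mult_ac)
  qed
  finally have "gmul (dder j f) g (insert j T) = \<dots>" .
  moreover have "gmul f (dder j g) (insert j T) = (\<Sum>A\<in>Pow T. merge_sign A (T - A)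
      * f (insert j A) * g (insert j (T - A)))"
    unfolding gmul_insert[OF T] using T by (auto simp: dder_def mult_ac intro!: sum.cong)
  moreover have "(-1) ^ card A * merge_sign A (T - A) * f (insert j A) * g (insert j (T - A))
      + psign q * (merge_sign A (T - A) * f (insert j A) * g (insert j (T - A))) = 0"
    if "A \<in> Pow T" for A
  proof (cases "f (insert j A) = 0")
    case False
    have "finite A" "j \<notin> A" using that T finite_subset by auto
    then have "card (insert j A) = Suc (card A)" by simp
    then have "psign q = - ((-1) ^ card A :: 'k)" using homogeneous_sign[OF f False] by simp
    then show ?thesis by simp
  qed simp
  ultimately show ?thesis by (simp add: sum_distrib_left flip: sum.distrib)
qed

lemma dder_gmul:
  fixes f :: "'k::field grass"
  assumes f: "homogeneous q f"
  shows "dder j (gmul f g) = (\<lambda>T. gmul (dder j f) g T + psign q * gmul f (dder j g) T)"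
proof
  fix T
  consider "finite T" "j \<notin> T" | T0 where "T = insert j T0" "finite T0" "j \<notin> T0" | "infinite T"
    by (metis finite_insert insert_Diff mk_disjoint_insert)
  then show "dder j (gmul f g) T = gmul (dder j f) g T + psign q * gmul f (dder j g) T"
  proof cases
    case 1
    then show ?thesis by (rule dder_gmul_notin[OF f])
  next
    case 2
    then show ?thesis using gmul_dder_insert_cancel[OF f, of T0 j g] by (simp add: dder_def)
  next
    case 3
    then show ?thesis by (simp add: dder_def gmul_infinite)
  qed
qed

section \<open>Elements of Lambda\<close>

lemma mem_Lambda_iff: "f \<in> Lambda \<longleftrightarrow> finite (gsupp f) \<and> (\<forall>S\<in>gsupp f. finite S)"
  unfolding Lambda_def gsupp_def by simp

lemma Lambda_finite: "f \<in> Lambda \<Longrightarrow> f S \<noteq> 0 \<Longrightarrow> finite S"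
  unfolding Lambda_def by simp

lemma Lambda_zero [simp]: "(\<lambda>T. 0) \<in> Lambda"
  unfolding Lambda_def by simp

lemma Lambda_lincomb: "f \<in> Lambda \<Longrightarrow> g \<in> Lambda \<Longrightarrow> (\<lambda>T. f T + c * g T) \<in> Lambda"
proof -
  assume f: "f \<in> Lambda" and g: "g \<in> Lambda"
  have "gsupp (\<lambda>T. f T + c * g T) \<subseteq> gsupp f \<union> gsupp g" unfolding gsupp_def by auto
  then show ?thesis
    using f g unfolding mem_Lambda_iff by (auto intro: finite_subset simp: gsupp_def)
qed

lemma Lambda_sum:
  "finite F \<Longrightarrow> (\<And>x. x \<in> F \<Longrightarrow> u x \<in> Lambda) \<Longrightarrow> (\<lambda>T. \<Sum>x\<in>F. c x * u x T) \<in> Lambda"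
proof (induction F rule: finite_induct)
  case (insert x F)
  then have "(\<lambda>T. (\<Sum>y\<in>F. c y * u y T) + c x * u x T) \<in> Lambda"
    by (intro Lambda_lincomb) auto
  then show ?case using insert by (simp add: add.commute)
qed simp

lemma gbasis_eq_0_iff [simp]: "gbasis X S = 0 \<longleftrightarrow> S \<noteq> X"
  unfolding gbasis_def by simp

lemma gbasis_Lambda: "finite X \<Longrightarrow> gbasis X \<in> Lambda"
  unfolding Lambda_def gbasis_def by simp

lemma Lambda_basis_expansion: "f \<in> Lambda \<Longrightarrow> f = (\<lambda>S. \<Sum>T\<in>gsupp f. f T * gbasis T S)"
proof
  fix S assume "f \<in> Lambda"
  then have "finite (gsupp f)" unfolding mem_Lambda_iff by simp
  moreover have "(\<Sum>T\<in>gsupp f. f T * gbasis T S) = (\<Sum>T\<in>gsupp f. if T = S then f S else 0)"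
    by (intro sum.cong) (auto simp: gbasis_def)
  ultimately show "f S = (\<Sum>T\<in>gsupp f. f T * gbasis T S)" by (simp add: sum.delta' gsupp_def)
qed

lemma gmul_nonzeroD:
  assumes "gmul f g T \<noteq> 0"
  shows "finite T \<and> (\<exists>A\<subseteq>T. f A \<noteq> 0 \<and> g (T - A) \<noteq> 0)"
proof -
  have "finite T" using assms gmul_infinite by blast
  moreover obtain A where "A \<in> Pow T" "merge_sign A (T - A) * f A * g (T - A) \<noteq> 0"
    using assms unfolding gmul_def by (meson sum.not_neutral_contains_not_neutral)
  ultimately show ?thesis by auto
qed

lemma gmul_Lambda:
  assumes f: "f \<in> Lambda" and g: "g \<in> Lambda"
  shows "gmul f g \<in> Lambda"
proof -
  have "gsupp (gmul f g) \<subseteq> (\<lambda>(A, B). A \<union> B) ` (gsupp f \<times> gsupp g)"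
  proof
    fix T assume "T \<in> gsupp (gmul f g)"
    then obtain A where "A \<subseteq> T" "f A \<noteq> 0" "g (T - A) \<noteq> 0"
      using gmul_nonzeroD unfolding gsupp_def by blast
    then show "T \<in> (\<lambda>(A, B). A \<union> B) ` (gsupp f \<times> gsupp g)"
      unfolding gsupp_def by (intro image_eqI[of _ _ "(A, T - A)"]) auto
  qed
  moreover have "finite ((\<lambda>(A, B). A \<union> B) ` (gsupp f \<times> gsupp g))"
    using f g unfolding mem_Lambda_iff by (intro finite_imageI finite_cartesian_product) simp_all
  ultimately have "finite (gsupp (gmul f g))" by (rule finite_subset)
  moreover have "\<forall>S\<in>gsupp (gmul f g). finite S" using gmul_nonzeroD unfolding gsupp_def by blast
  ultimately show ?thesis unfolding mem_Lambda_iff by blast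
qed

lemma dder_Lambda:
  assumes f: "f \<in> Lambda"
  shows "dder j f \<in> Lambda"
proof -
  have "gsupp (dder j f) \<subseteq> (\<lambda>S. S - {j}) ` gsupp f"
  proof
    fix T assume "T \<in> gsupp (dder j f)"
    then have "j \<notin> T" "f (insert j T) \<noteq> 0" unfolding gsupp_def dder_def by (auto split: if_splits)
    then show "T \<in> (\<lambda>S. S - {j}) ` gsupp f"
      unfolding gsupp_def by (intro image_eqI[of _ _ "insert j T"]) auto
  qed
  then show ?thesis
    using f unfolding mem_Lambda_iff by (auto intro: finite_subset simp: gsupp_def dder_def split: if_splits)
qed

lemma xmul_Lambda:
  assumes f: "f \<in> Lambda"
  shows "xmul j f \<in> Lambda"
proof -
  have "gsupp (xmul j f) \<subseteq> insert j ` gsupp f"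
  proof
    fix T assume "T \<in> gsupp (xmul j f)"
    then have "j \<in> T" "f (T - {j}) \<noteq> 0" unfolding gsupp_def xmul_def by (auto split: if_splits)
    then show "T \<in> insert j ` gsupp f"
      unfolding gsupp_def by (intro image_eqI[of _ _ "T - {j}"]) auto
  qed
  then show ?thesis
    using f unfolding mem_Lambda_iff by (auto intro: finite_subset simp: gsupp_def xmul_def split: if_splits)
qed

lemma homogeneous_gbasis: "finite X \<Longrightarrow> homogeneous (odd (card X)) (gbasis X)"
  unfolding homogeneous_def gbasis_def by auto

lemma homogeneous_lincomb: "homogeneous q u \<Longrightarrow> homogeneous q v \<Longrightarrow> homogeneous q (\<lambda>T. u T + c * v T)"
  unfolding homogeneous_def by (metis add.right_neutral mult_zero_right)

lemma homogeneous_sum: "(\<And>x. x \<in> F \<Longrightarrow> homogeneous q (u x)) \<Longrightarrow> homogeneous q (\<lambda>T. \<Sum>x\<in>F. u x T)"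
  unfolding homogeneous_def by (metis (mono_tags, lifting) sum.neutral)

lemma homogeneous_dder:
  assumes f: "f \<in> Lambda" and hf: "homogeneous q f"
  shows "homogeneous (\<not> q) (dder j f)"
  unfolding homogeneous_def
proof (intro allI impI)
  fix T assume "dder j f T \<noteq> 0"
  then have T: "j \<notin> T" "f (insert j T) \<noteq> 0" unfolding dder_def by (auto split: if_splits)
  then have "finite T" using Lambda_finite[OF f T(2)] by simp
  then show "odd (card T) = (\<not> q)" using hf T unfolding homogeneous_def by force
qed

lemma homogeneous_xmul:
  assumes f: "f \<in> Lambda" and hf: "homogeneous q f"
  shows "homogeneous (\<not> q) (xmul j f)"
  unfolding homogeneous_def
proof (intro allI impI)
  fix T assume "xmul j f T \<noteq> 0"
  then have T: "j \<in> T" "f (T - {j}) \<noteq> 0" unfolding xmul_def by (auto split: if_splits)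
  then have "finite T" using Lambda_finite[OF f T(2)] by simp
  then have "card T = Suc (card (T - {j}))" using T(1) by (metis card_Suc_Diff1)
  then show "odd (card T) = (\<not> q)" using hf T(2) unfolding homogeneous_def by force
qed

lemma gmul_lincomb_left:
  "gmul (\<lambda>T. u T + c * v T) g T = gmul u g T + c * gmul v g T"
  unfolding gmul_def by (simp add: sum.distrib sum_distrib_left algebra_simps)

lemma gmul_lincomb_right:
  "gmul f (\<lambda>T. u T + c * v T) T = gmul f u T + c * gmul f v T"
  unfolding gmul_def by (simp add: sum.distrib sum_distrib_left algebra_simps)

lemma gmul_sum_left: "gmul (\<lambda>T. \<Sum>k\<in>F. u k T) g T = (\<Sum>k\<in>F. gmul (u k) g T)"
  unfolding gmul_def sum_distrib_left sum_distrib_right by (subst sum.swap) (simp add: algebra_simps)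

lemma gmul_sum_right: "gmul f (\<lambda>T. \<Sum>k\<in>F. u k T) T = (\<Sum>k\<in>F. gmul f (u k) T)"
  unfolding gmul_def sum_distrib_left sum_distrib_right by (subst sum.swap) (simp add: algebra_simps)

lemma gmul_one_left: "h \<in> Lambda \<Longrightarrow> gmul (gbasis {}) h = h"
proof
  fix T assume h: "h \<in> Lambda"
  show "gmul (gbasis {}) h T = h T"
  proof (cases "finite T")
    case True
    have "gmul (gbasis {}) h T = (\<Sum>A\<in>Pow T. if A = {} then h T else 0)"
      unfolding gmul_def gbasis_def by (intro sum.cong) auto
    then show ?thesis using True by (simp add: sum.delta)
  next
    case False
    then show ?thesis using h gmul_infinite Lambda_finite by metis
  qed
qed

lemma gmul_one_right: "h \<in> Lambda \<Longrightarrow> gmul h (gbasis {}) = h"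
proof
  fix T assume h: "h \<in> Lambda"
  show "gmul h (gbasis {}) T = h T"
  proof (cases "finite T")
    case True
    have "gmul h (gbasis {}) T = (\<Sum>A\<in>Pow T. if A = T then h T else 0)"
      unfolding gmul_def gbasis_def by (intro sum.cong) auto
    then show ?thesis using True by (simp add: sum.delta)
  next
    case False
    then show ?thesis using h gmul_infinite Lambda_finite by metis
  qed
qed

lemma gbasis_insert_min:
  assumes "finite A" "\<forall>x\<in>A. b < x"
  shows "gbasis (insert b A) = (gmul (gbasis {b}) (gbasis A) :: 'k::field grass)"
proof
  fix T
  have "{x\<in>A. x < b} = {}" using assms(2) by auto
  then have "merge_sign {b} A = (1::'k)"
    unfolding merge_sign_def inversions_def by (simp del: Collect_empty_eq)
  moreover have bA: "b \<notin> A" using assms(2) by auto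
  ultimately have "gmul (gbasis {b}) (gbasis A) T = (\<Sum>B\<in>Pow T. if B = {b} \<and> T = insert b A then 1 else 0 :: 'k)"
    unfolding gmul_def gbasis_def by (intro sum.cong) auto
  also have "\<dots> = gbasis (insert b A) T"
    using assms(1) by (cases "T = insert b A") (simp_all add: gbasis_def sum.delta)
  finally show "gbasis (insert b A) T = (gmul (gbasis {b}) (gbasis A) T :: 'k)" by simp
qed

section \<open>Superderivations\<close>

definition Lambda_linear :: "'k::field gop \<Rightarrow> bool" where
  "Lambda_linear a \<longleftrightarrow> (\<forall>f\<in>Lambda. a f \<in> Lambda) \<and>
     (\<forall>f\<in>Lambda. \<forall>g\<in>Lambda. \<forall>c. a (\<lambda>T. f T + c * g T) = (\<lambda>T. a f T + c * a g T))"

definition shifts_parity :: "'k::field gop \<Rightarrow> bool \<Rightarrow> bool" where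
  "shifts_parity a p \<longleftrightarrow> (\<forall>f\<in>Lambda. \<forall>q. homogeneous q f \<longrightarrow> homogeneous (q \<noteq> p) (a f))"

definition super_leibniz :: "'k::field gop \<Rightarrow> bool \<Rightarrow> bool" where
  "super_leibniz a p \<longleftrightarrow> (\<forall>f\<in>Lambda. \<forall>g\<in>Lambda. \<forall>q. homogeneous q f \<longrightarrow>
      a (gmul f g) = (\<lambda>T. gmul (a f) g T + psign (p \<and> q) * gmul f (a g) T))"

definition superderivation :: "'k::field gop \<Rightarrow> bool \<Rightarrow> bool" where
  "superderivation a p \<longleftrightarrow> Lambda_linear a \<and> shifts_parity a p \<and> super_leibniz a p"

lemma Lambda_linear_Lambda: "Lambda_linear a \<Longrightarrow> f \<in> Lambda \<Longrightarrow> a f \<in> Lambda"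
  unfolding Lambda_linear_def by blast

lemma Lambda_linear_lincomb:
  "Lambda_linear a \<Longrightarrow> f \<in> Lambda \<Longrightarrow> g \<in> Lambda \<Longrightarrow> a (\<lambda>T. f T + c * g T) = (\<lambda>T. a f T + c * a g T)"
  unfolding Lambda_linear_def by blast

lemma Lambda_linear_zero:
  assumes "Lambda_linear a"
  shows "a (\<lambda>T. 0) = (\<lambda>T. 0)"
proof -
  have a0: "a (\<lambda>T. 0) = (\<lambda>T. a (\<lambda>T. 0) T + a (\<lambda>T. 0) T)"
    using Lambda_linear_lincomb[OF assms Lambda_zero Lambda_zero, of 1] by simp
  have "a (\<lambda>T. 0) T = 0" for T
    using fun_cong[OF a0, of T] by (simp only: add_cancel_right_right)
  then show ?thesis by auto
qed

lemma Lambda_linear_sum: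
  assumes a: "Lambda_linear a" and F: "finite F" "\<And>x. x \<in> F \<Longrightarrow> u x \<in> Lambda"
  shows "a (\<lambda>T. \<Sum>x\<in>F. c x * u x T) = (\<lambda>T. \<Sum>x\<in>F. c x * a (u x) T)"
  using F
proof (induction F rule: finite_induct)
  case empty
  then show ?case using Lambda_linear_zero[OF a] by simp
next
  case (insert x F)
  have "a (\<lambda>T. (\<Sum>y\<in>F. c y * u y T) + c x * u x T)
      = (\<lambda>T. a (\<lambda>T. \<Sum>y\<in>F. c y * u y T) T + c x * a (u x) T)"
    using insert by (intro Lambda_linear_lincomb[OF a] Lambda_sum) auto
  then show ?case using insert by (simp add: add.commute)
qed

lemma Lambda_linear_comp: "Lambda_linear a \<Longrightarrow> Lambda_linear b \<Longrightarrow> Lambda_linear (\<lambda>f. a (b f))"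
  unfolding Lambda_linear_def by simp

lemma shifts_parityD: "shifts_parity a p \<Longrightarrow> f \<in> Lambda \<Longrightarrow> homogeneous q f \<Longrightarrow> homogeneous (q \<noteq> p) (a f)"
  unfolding shifts_parity_def by blast

lemma super_leibnizD:
  "super_leibniz a p \<Longrightarrow> f \<in> Lambda \<Longrightarrow> g \<in> Lambda \<Longrightarrow> homogeneous q f \<Longrightarrow>
     a (gmul f g) = (\<lambda>T. gmul (a f) g T + psign (p \<and> q) * gmul f (a g) T)"
  unfolding super_leibniz_def by blast

lemma superbracket_eq:
  "superbracket a pa b pb = (\<lambda>f T. a (b f) T + (- psign (pa \<and> pb)) * b (a f) T)"
  unfolding superbracket_def psign_def by (intro ext) auto

lemma Lambda_linear_commutator:
  assumes a: "Lambda_linear a" and b: "Lambda_linear b"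
  shows "Lambda_linear (\<lambda>f T. a (b f) T + c * b (a f) T)"
  unfolding Lambda_linear_def
proof (intro conjI ballI allI)
  fix f :: "'a grass" assume f: "f \<in> Lambda"
  show "(\<lambda>T. a (b f) T + c * b (a f) T) \<in> Lambda"
    using f a b by (intro Lambda_lincomb) (auto intro: Lambda_linear_Lambda)
next
  fix f g :: "'a grass" and d :: 'a assume f: "f \<in> Lambda" and g: "g \<in> Lambda"
  have "a (b (\<lambda>T. f T + d * g T)) = (\<lambda>T. a (b f) T + d * a (b g) T)"
    using Lambda_linear_lincomb[OF a Lambda_linear_Lambda[OF b f] Lambda_linear_Lambda[OF b g]]
    by (simp add: Lambda_linear_lincomb[OF b f g])
  moreover have "b (a (\<lambda>T. f T + d * g T)) = (\<lambda>T. b (a f) T + d * b (a g) T)"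
    using Lambda_linear_lincomb[OF b Lambda_linear_Lambda[OF a f] Lambda_linear_Lambda[OF a g]]
    by (simp add: Lambda_linear_lincomb[OF a f g])
  ultimately show "(\<lambda>T. a (b (\<lambda>T. f T + d * g T)) T + c * b (a (\<lambda>T. f T + d * g T)) T)
      = (\<lambda>T. a (b f) T + c * b (a f) T + d * (a (b g) T + c * b (a g) T))"
    by (simp add: algebra_simps)
qed

lemma shifts_parity_comp:
  assumes lb: "Lambda_linear b" and pa: "shifts_parity a pa" and pb: "shifts_parity b pb"
  shows "shifts_parity (\<lambda>f. a (b f)) (pa \<noteq> pb)"
  unfolding shifts_parity_def
proof (intro ballI allI impI)
  fix f :: "'a grass" and q assume f: "f \<in> Lambda" and h: "homogeneous q f"
  have "homogeneous ((q \<noteq> pb) \<noteq> pa) (a (b f))"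
    using shifts_parityD[OF pa Lambda_linear_Lambda[OF lb f] shifts_parityD[OF pb f h]] .
  moreover have "((q \<noteq> pb) \<noteq> pa) = (q \<noteq> (pa \<noteq> pb))" by auto
  ultimately show "homogeneous (q \<noteq> (pa \<noteq> pb)) (a (b f))" by simp
qed

lemma shifts_parity_commutator:
  assumes la: "Lambda_linear a" and lb: "Lambda_linear b"
    and pa: "shifts_parity a pa" and pb: "shifts_parity b pb"
  shows "shifts_parity (\<lambda>f T. a (b f) T + c * b (a f) T) (pa \<noteq> pb)"
  unfolding shifts_parity_def
proof (intro ballI allI impI)
  fix f :: "'a grass" and q assume f: "f \<in> Lambda" and h: "homogeneous q f"
  have "homogeneous (q \<noteq> (pa \<noteq> pb)) (a (b f))"
    using shifts_parityD[OF shifts_parity_comp[OF lb pa pb] f h] .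
  moreover have "homogeneous (q \<noteq> (pb \<noteq> pa)) (b (a f))"
    using shifts_parityD[OF shifts_parity_comp[OF la pb pa] f h] .
  ultimately show "homogeneous (q \<noteq> (pa \<noteq> pb)) (\<lambda>T. a (b f) T + c * b (a f) T)"
    by (simp add: homogeneous_lincomb eq_commute[of pb pa])
qed

lemma super_leibniz_superbracket:
  assumes la: "Lambda_linear a" and lb: "Lambda_linear b"
    and pa: "shifts_parity a pa" and pb: "shifts_parity b pb"
    and da: "super_leibniz a pa" and db: "super_leibniz b pb"
  shows "super_leibniz (superbracket a pa b pb) (pa \<noteq> pb)"
  unfolding super_leibniz_def superbracket_eq
proof (intro ballI allI impI ext)
  fix f g :: "'a grass" and q T assume f: "f \<in> Lambda" and g: "g \<in> Lambda" and h: "homogeneous q f"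
  have L: "b f \<in> Lambda" "b g \<in> Lambda" "a f \<in> Lambda" "a g \<in> Lambda"
    using Lambda_linear_Lambda la lb f g by auto
  have hbf: "homogeneous (q \<noteq> pb) (b f)" "homogeneous (q \<noteq> pa) (a f)"
    using shifts_parityD pa pb f h by auto
  have "a (b (gmul f g)) = (\<lambda>T. a (gmul (b f) g) T + psign (pb \<and> q) * a (gmul f (b g)) T)"
    unfolding super_leibnizD[OF db f g h]
    by (rule Lambda_linear_lincomb[OF la gmul_Lambda[OF L(1) g] gmul_Lambda[OF f L(2)]])
  then have AB: "a (b (gmul f g)) T = gmul (a (b f)) g T + psign (pa \<and> (q \<noteq> pb)) * gmul (b f) (a g) T
     + psign (pb \<and> q) * (gmul (a f) (b g) T + psign (pa \<and> q) * gmul f (a (b g)) T)"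
    using super_leibnizD[OF da L(1) g hbf(1)] super_leibnizD[OF da f L(2) h] by simp
  have "b (a (gmul f g)) = (\<lambda>T. b (gmul (a f) g) T + psign (pa \<and> q) * b (gmul f (a g)) T)"
    unfolding super_leibnizD[OF da f g h]
    by (rule Lambda_linear_lincomb[OF lb gmul_Lambda[OF L(3) g] gmul_Lambda[OF f L(4)]])
  then have BA: "b (a (gmul f g)) T = gmul (b (a f)) g T + psign (pb \<and> (q \<noteq> pa)) * gmul (a f) (b g) T
     + psign (pa \<and> q) * (gmul (b f) (a g) T + psign (pb \<and> q) * gmul f (b (a g)) T)"
    using super_leibnizD[OF db L(3) g hbf(2)] super_leibnizD[OF db f L(4) h] by simp
  show "a (b (gmul f g)) T + - psign (pa \<and> pb) * b (a (gmul f g)) T =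
      gmul (\<lambda>T. a (b f) T + - psign (pa \<and> pb) * b (a f) T) g T
      + psign ((pa \<noteq> pb) \<and> q) * gmul f (\<lambda>T. a (b g) T + - psign (pa \<and> pb) * b (a g) T) T"
    unfolding gmul_lincomb_left gmul_lincomb_right AB BA
    by (cases pa; cases pb; cases q) (simp_all add: psign_def algebra_simps)
qed

lemma super_leibniz_square:
  assumes la: "Lambda_linear a" and pa: "shifts_parity a True" and da: "super_leibniz a True"
  shows "super_leibniz (\<lambda>f. a (a f)) False"
  unfolding super_leibniz_def
proof (intro ballI allI impI ext)
  fix f g :: "'a grass" and q T assume f: "f \<in> Lambda" and g: "g \<in> Lambda" and h: "homogeneous q f"
  have L: "a f \<in> Lambda" "a g \<in> Lambda" using Lambda_linear_Lambda la f g by auto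
  have "a (a (gmul f g)) = (\<lambda>T. a (gmul (a f) g) T + psign (True \<and> q) * a (gmul f (a g)) T)"
    unfolding super_leibnizD[OF da f g h]
    by (rule Lambda_linear_lincomb[OF la gmul_Lambda[OF L(1) g] gmul_Lambda[OF f L(2)]])
  then have "a (a (gmul f g)) T = gmul (a (a f)) g T + psign (\<not> q) * gmul (a f) (a g) T
     + psign q * (gmul (a f) (a g) T + psign q * gmul f (a (a g)) T)"
    using super_leibnizD[OF da L(1) g shifts_parityD[OF pa f h]] super_leibnizD[OF da f L(2) h] by simp
  then show "a (a (gmul f g)) T = gmul (a (a f)) g T + psign (False \<and> q) * gmul f (a (a g)) T"
    by (cases q) (simp_all add: psign_def algebra_simps)
qed

lemma superderivation_superbracket:
  assumes "superderivation a pa" "superderivation b pb"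
  shows "superderivation (superbracket a pa b pb) (pa \<noteq> pb)"
proof -
  have a: "Lambda_linear a" "shifts_parity a pa" "super_leibniz a pa"
    and b: "Lambda_linear b" "shifts_parity b pb" "super_leibniz b pb"
    using assms unfolding superderivation_def by auto
  show ?thesis
    using Lambda_linear_commutator[OF a(1) b(1)] shifts_parity_commutator[OF a(1) b(1) a(2) b(2)]
      super_leibniz_superbracket[OF a(1) b(1) a(2) b(2) a(3) b(3)]
    unfolding superderivation_def superbracket_eq by blast
qed

text \<open>No assumption on the characteristic is needed: the square of an odd superderivation is an
  even derivation.\<close>
lemma superderivation_square:
  assumes "superderivation a True"
  shows "superderivation (\<lambda>f. a (a f)) False"
  using assms shifts_parity_comp[of a a True True] unfolding superderivation_def
  by (simp add: Lambda_linear_comp super_leibniz_square)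

lemma Lambda_linear_nonzero_basis:
  assumes a: "Lambda_linear a" and f: "f \<in> Lambda" and nz: "a f S \<noteq> 0"
  shows "\<exists>T\<in>gsupp f. a (gbasis T) S \<noteq> 0"
proof -
  have fin: "finite (gsupp f)" "\<And>T. T \<in> gsupp f \<Longrightarrow> finite T"
    using f unfolding mem_Lambda_iff by auto
  have "a f = a (\<lambda>S. \<Sum>T\<in>gsupp f. f T * gbasis T S)"
    using Lambda_basis_expansion[OF f] by simp
  also have "\<dots> = (\<lambda>S. \<Sum>T\<in>gsupp f. f T * a (gbasis T) S)"
    using fin by (intro Lambda_linear_sum[OF a]) (auto intro: gbasis_Lambda)
  finally have "(\<Sum>T\<in>gsupp f. f T * a (gbasis T) S) \<noteq> 0"
    using nz by simp
  then obtain T where "T \<in> gsupp f" "f T * a (gbasis T) S \<noteq> 0"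
    by (rule sum.not_neutral_contains_not_neutral)
  then show ?thesis by auto
qed

lemma super_leibniz_gbasis_empty:
  fixes a :: "'k::field gop"
  assumes a: "Lambda_linear a" and d: "super_leibniz a p"
  shows "a (gbasis {}) = (\<lambda>T. 0)"
proof -
  have L: "(gbasis {} :: 'k grass) \<in> Lambda" "a (gbasis {}) \<in> Lambda"
    using gbasis_Lambda Lambda_linear_Lambda[OF a] by auto
  have h: "homogeneous False (gbasis {} :: 'k grass)" using homogeneous_gbasis[of "{}"] by simp
  have "a (gbasis {}) = a (gmul (gbasis {}) (gbasis {} :: 'k grass))" using gmul_one_left[OF L(1)] by simp
  also have "\<dots> = (\<lambda>T. gmul (a (gbasis {})) (gbasis {}) T + psign (p \<and> False) * gmul (gbasis {}) (a (gbasis {})) T)"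
    by (rule super_leibnizD[OF d L(1) L(1) h])
  also have "\<dots> = (\<lambda>T. a (gbasis {}) T + a (gbasis {}) T)"
    by (simp add: gmul_one_left[OF L(2)] gmul_one_right[OF L(2)] psign_def)
  finally have eq: "a (gbasis {}) = (\<lambda>T. a (gbasis {}) T + a (gbasis {}) T)" .
  have "a (gbasis {}) T = 0" for T
    using fun_cong[OF eq, of T] by (simp only: add_cancel_right_right)
  then show ?thesis by auto
qed

text \<open>Iterating Leibniz' rule for x_T = x_b x_(T - b), b = min T, writes a(x_T) as a sum of terms
  \<plusminus> a(x_j) x_(T - j).\<close>
lemma super_leibniz_support:
  assumes a: "Lambda_linear a" and d: "super_leibniz a p" and fin: "finite T"
    and nz: "a (gbasis T) S \<noteq> 0"
  shows "\<exists>j\<in>T. \<exists>S'. a (gbasis {j}) S' \<noteq> 0 \<and> S' \<inter> (T - {j}) = {} \<and> S = S' \<union> (T - {j})"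
  using fin nz
proof (induction T arbitrary: S rule: finite_linorder_min_induct)
  case empty
  then show ?case using super_leibniz_gbasis_empty[OF a d] by simp
next
  case (insert b A)
  have L: "gbasis A \<in> Lambda" "gbasis {b} \<in> Lambda" using insert(1) by (auto intro: gbasis_Lambda)
  have hb: "homogeneous True (gbasis {b} :: 'a grass)" using homogeneous_gbasis[of "{b}"] by simp
  have "a (gbasis (insert b A)) S
      = gmul (a (gbasis {b})) (gbasis A) S + psign p * gmul (gbasis {b}) (a (gbasis A)) S"
    unfolding gbasis_insert_min[OF insert(1,2)] super_leibnizD[OF d L(2) L(1) hb] by simp
  then consider "gmul (a (gbasis {b})) (gbasis A) S \<noteq> 0" | "gmul (gbasis {b}) (a (gbasis A)) S \<noteq> 0"
    using insert(4) by (metis add_0 mult_zero_right)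
  then show ?case
  proof cases
    case 1
    then obtain B where B: "B \<subseteq> S" "a (gbasis {b}) B \<noteq> 0" "S - B = A"
      using gmul_nonzeroD[of "a (gbasis {b})" "gbasis A" S] by auto
    then have "B \<inter> (insert b A - {b}) = {}" "S = B \<union> (insert b A - {b})"
      using insert(2) by auto
    then show ?thesis using B(2) by (intro bexI[of _ b] exI[of _ B]) simp_all
  next
    case 2
    then obtain B where B: "B \<subseteq> S" "B = {b}" "a (gbasis A) (S - B) \<noteq> 0"
      using gmul_nonzeroD[of "gbasis {b}" "a (gbasis A)" S] by auto
    then obtain j S' where j: "j \<in> A" "a (gbasis {j}) S' \<noteq> 0" "S' \<inter> (A - {j}) = {}"
        "S - {b} = S' \<union> (A - {j})"
      using insert(3)[OF B(3)[unfolded B(2)]] by blast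
    have "b \<in> S" "b \<noteq> j" using B j(1) insert(2) by auto
    then have "S' \<inter> (insert b A - {j}) = {}" "S = S' \<union> (insert b A - {j})" using j(3,4) by auto
    then show ?thesis using j(1,2) by (intro bexI[of _ j] exI[of _ S']) simp_all
  qed
qed

lemma super_leibniz_nonzero_generator:
  assumes a: "Lambda_linear a" and d: "super_leibniz a p" and f: "f \<in> Lambda" and nz: "a f \<noteq> (\<lambda>T. 0)"
  shows "\<exists>j S. a (gbasis {j}) S \<noteq> 0"
proof -
  obtain S where "a f S \<noteq> 0" using nz by auto
  then obtain T where T: "T \<in> gsupp f" "a (gbasis T) S \<noteq> 0"
    using Lambda_linear_nonzero_basis[OF a f] by blast
  have "finite T" using T(1) f unfolding mem_Lambda_iff by blast
  then obtain j S' where "a (gbasis {j}) S' \<noteq> 0"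
    using super_leibniz_support[OF a d _ T(2)] by blast
  then show ?thesis by blast
qed

lemma super_leibniz_comp_support:
  assumes a: "Lambda_linear a" "super_leibniz a p" and b: "Lambda_linear b"
    and nz: "a (b (gbasis {k})) S \<noteq> 0"
  shows "\<exists>T j S'. b (gbasis {k}) T \<noteq> 0 \<and> j \<in> T \<and> a (gbasis {j}) S' \<noteq> 0 \<and>
           S' \<inter> (T - {j}) = {} \<and> S = S' \<union> (T - {j})"
proof -
  have L: "b (gbasis {k}) \<in> Lambda" using Lambda_linear_Lambda[OF b gbasis_Lambda] by simp
  obtain T where T: "T \<in> gsupp (b (gbasis {k}))" "a (gbasis T) S \<noteq> 0"
    using Lambda_linear_nonzero_basis[OF a(1) L nz] by blast
  have "finite T" using T(1) L unfolding mem_Lambda_iff by blast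
  then obtain j S' where "j \<in> T" "a (gbasis {j}) S' \<noteq> 0" "S' \<inter> (T - {j}) = {}" "S = S' \<union> (T - {j})"
    using super_leibniz_support[OF a _ T(2)] by blast
  moreover have "b (gbasis {k}) T \<noteq> 0" using T(1) unfolding gsupp_def by simp
  ultimately show ?thesis by blast
qed

section \<open>The pivot elements\<close>

definition pivot_prefix :: "nat \<Rightarrow> nat \<Rightarrow> 'k::field gop" where
  "pivot_prefix i k h = foldr (\<lambda>n g. xmul (i + 3*n) (xmul (i + 3*n + 1) g)) [0..<k] h"

text \<open>pivot_term i k f = x_(pivot_block i k) d_(i+3k) f.\<close>
definition pivot_block :: "nat \<Rightarrow> nat \<Rightarrow> nat set" where
  "pivot_block m r = {t. \<exists>n<r. t = m + 3*n \<or> t = m + 3*n + 1}"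

lemma pivot_term_eq: "pivot_term i k f = pivot_prefix i k (dder (i + 3*k) f)"
  unfolding pivot_term_def pivot_prefix_def by simp

lemma pivot_prefix_0 [simp]: "pivot_prefix i 0 h = h"
  unfolding pivot_prefix_def by simp

lemma pivot_prefix_Suc: "pivot_prefix i (Suc k) h = pivot_prefix i k (xmul (i + 3*k) (xmul (i + 3*k + 1) h))"
  unfolding pivot_prefix_def by simp

lemma pivot_block_0 [simp]: "pivot_block m 0 = {}"
  unfolding pivot_block_def by simp

lemma pivot_block_Suc: "pivot_block m (Suc r) = pivot_block m r \<union> {m + 3*r, m + 3*r + 1}"
  unfolding pivot_block_def by (auto simp: less_Suc_eq)

lemma xmul_lincomb: "xmul j (\<lambda>T. u T + c * v T) = (\<lambda>T. xmul j u T + c * xmul j v T)"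
  unfolding xmul_def by (intro ext) (simp add: algebra_simps)

lemma xmul_zero [simp]: "xmul j (\<lambda>T. 0) = (\<lambda>T. 0)"
  unfolding xmul_def by (simp add: fun_eq_iff)

lemma xmul_scale: "xmul j (\<lambda>T. c * v T) = (\<lambda>T. c * xmul j v T)"
  unfolding xmul_def by (intro ext) (simp add: algebra_simps)

lemma dder_lincomb: "dder j (\<lambda>T. u T + c * v T) = (\<lambda>T. dder j u T + c * dder j v T)"
  unfolding dder_def by (intro ext) (simp add: algebra_simps)

lemma pivot_prefix_lincomb:
  "pivot_prefix i k (\<lambda>T. u T + c * v T) = (\<lambda>T. pivot_prefix i k u T + c * pivot_prefix i k v T)"
  by (induction k arbitrary: u v) (simp_all add: pivot_prefix_Suc xmul_lincomb)

lemma pivot_prefix_zero: "pivot_prefix i k (\<lambda>T. 0) = (\<lambda>T. 0)"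
  by (induction k) (simp_all add: pivot_prefix_Suc)

lemma pivot_prefix_gmul_left: "pivot_prefix i k (gmul u g) = gmul (pivot_prefix i k u) g"
  by (induction k arbitrary: u) (simp_all add: pivot_prefix_Suc xmul_gmul_left)

text \<open>The prefix multiplies by an even monomial, which supercommutes with everything.\<close>
lemma pivot_prefix_gmul_right:
  fixes f :: "'k::field grass"
  assumes "homogeneous q f"
  shows "pivot_prefix i k (gmul f w) = gmul f (pivot_prefix i k w)"
proof (induction k arbitrary: w)
  case (Suc k)
  have "xmul (i + 3*k) (xmul (i + 3*k + 1) (gmul f w)) = gmul f (xmul (i + 3*k) (xmul (i + 3*k + 1) w))"
    by (simp add: xmul_gmul_right[OF assms] xmul_scale mult.assoc[symmetric])
  then show ?case using Suc by (simp add: pivot_prefix_Suc)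
qed simp

lemma pivot_prefix_Lambda: "h \<in> Lambda \<Longrightarrow> pivot_prefix i k h \<in> Lambda"
  by (induction k arbitrary: h) (simp_all add: pivot_prefix_Suc xmul_Lambda)

lemma pivot_prefix_homogeneous: "h \<in> Lambda \<Longrightarrow> homogeneous q h \<Longrightarrow> homogeneous q (pivot_prefix i k h)"
proof (induction k arbitrary: h)
  case (Suc k)
  have "homogeneous (\<not> \<not> q) (xmul (i + 3*k) (xmul (i + 3*k + 1) h))"
    using Suc.prems by (intro homogeneous_xmul xmul_Lambda) auto
  then show ?case using Suc by (simp add: pivot_prefix_Suc xmul_Lambda)
qed simp

lemma pivot_prefix_nonzeroD: "pivot_prefix i k h S \<noteq> 0 \<Longrightarrow> \<exists>B. h B \<noteq> 0 \<and> S = B \<union> pivot_block i k"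
proof (induction k arbitrary: h)
  case (Suc k)
  obtain B where B: "xmul (i + 3*k) (xmul (i + 3*k + 1) h) B \<noteq> 0" "S = B \<union> pivot_block i k"
    using Suc by (auto simp: pivot_prefix_Suc)
  then have "i + 3*k \<in> B" "i + 3*k + 1 \<in> B" "h (B - {i + 3*k} - {i + 3*k + 1}) \<noteq> 0"
    unfolding xmul_def by (auto split: if_splits)
  moreover have "S = (B - {i + 3*k} - {i + 3*k + 1}) \<union> pivot_block i (Suc k)"
    using B(2) calculation(1,2) unfolding pivot_block_Suc by auto
  ultimately show ?case by blast
qed simp

definition pivot_range :: "nat \<Rightarrow> 'k::field grass \<Rightarrow> nat set" where
  "pivot_range i f = {k. dder (i + 3*k) f \<noteq> (\<lambda>T. 0)}"

lemma finite_pivot_range: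
  assumes f: "f \<in> Lambda"
  shows "finite (pivot_range i f)"
proof -
  have "pivot_range i f \<subseteq> (\<lambda>k. i + 3*k) -` \<Union>(gsupp f)"
  proof
    fix k assume "k \<in> pivot_range i f"
    then obtain T where "dder (i + 3*k) f T \<noteq> 0" unfolding pivot_range_def by auto
    then have "f (insert (i + 3*k) T) \<noteq> 0" unfolding dder_def by (auto split: if_splits)
    then show "k \<in> (\<lambda>k. i + 3*k) -` \<Union>(gsupp f)" unfolding gsupp_def by auto
  qed
  moreover have "finite ((\<lambda>k. i + 3*k) -` \<Union>(gsupp f))"
    using f unfolding mem_Lambda_iff by (intro finite_vimageI) (auto simp: inj_on_def)
  ultimately show ?thesis by (rule finite_subset)
qed

lemma pivot_eq_sum:
  assumes "finite F" "pivot_range i f \<subseteq> F"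
  shows "pivot i f = (\<lambda>T. \<Sum>k\<in>F. pivot_term i k f T)"
proof
  fix T
  have "pivot_term i k f T = 0" if "k \<in> F - pivot_range i f" for k
    using that unfolding pivot_range_def pivot_term_eq by (simp add: pivot_prefix_zero)
  then show "pivot i f T = (\<Sum>k\<in>F. pivot_term i k f T)"
    unfolding pivot_def pivot_range_def[symmetric] using assms by (intro sum.mono_neutral_left) auto
qed

lemma pivot_term_Lambda: "f \<in> Lambda \<Longrightarrow> pivot_term i k f \<in> Lambda"
  unfolding pivot_term_eq by (intro pivot_prefix_Lambda dder_Lambda)

lemma pivot_Lambda_linear: "Lambda_linear (pivot i)"
  unfolding Lambda_linear_def
proof (intro conjI ballI allI)
  fix f :: "'a grass" assume f: "f \<in> Lambda"
  have "(\<lambda>T. \<Sum>k\<in>pivot_range i f. 1 * pivot_term i k f T) \<in> Lambda"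
    using f finite_pivot_range[OF f] by (intro Lambda_sum) (auto intro: pivot_term_Lambda)
  then show "pivot i f \<in> Lambda" using pivot_eq_sum[OF finite_pivot_range[OF f] order_refl] by simp
next
  fix f g :: "'a grass" and c assume f: "f \<in> Lambda" and g: "g \<in> Lambda"
  define F where "F = pivot_range i f \<union> pivot_range i g \<union> pivot_range i (\<lambda>T. f T + c * g T)"
  have F: "finite F" unfolding F_def using f g finite_pivot_range Lambda_lincomb by blast
  have "pivot_range i f \<subseteq> F" "pivot_range i g \<subseteq> F" "pivot_range i (\<lambda>T. f T + c * g T) \<subseteq> F"
    unfolding F_def by auto
  then show "pivot i (\<lambda>T. f T + c * g T) = (\<lambda>T. pivot i f T + c * pivot i g T)"
    by (simp add: pivot_eq_sum[OF F] pivot_term_eq dder_lincomb pivot_prefix_lincomb sum.distrib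
        sum_distrib_left)
qed

lemma pivot_shifts_parity: "shifts_parity (pivot i) True"
  unfolding shifts_parity_def
proof (intro ballI allI impI)
  fix f :: "'a grass" and q assume f: "f \<in> Lambda" and h: "homogeneous q f"
  have "homogeneous (\<not> q) (\<lambda>T. \<Sum>k\<in>pivot_range i f. pivot_term i k f T)"
    unfolding pivot_term_eq using f h
    by (intro homogeneous_sum pivot_prefix_homogeneous dder_Lambda homogeneous_dder)
  then show "homogeneous (q \<noteq> True) (pivot i f)"
    using pivot_eq_sum[OF finite_pivot_range[OF f] order_refl] by simp
qed

lemma pivot_super_leibniz: "super_leibniz (pivot i) True"
  unfolding super_leibniz_def
proof (intro ballI allI impI ext)
  fix f g :: "'a grass" and q T assume f: "f \<in> Lambda" and g: "g \<in> Lambda" and h: "homogeneous q f"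
  define F where "F = pivot_range i f \<union> pivot_range i g \<union> pivot_range i (gmul f g)"
  have F: "finite F" unfolding F_def using f g finite_pivot_range gmul_Lambda by blast
  have pt: "pivot_term i k (gmul f g) T = gmul (pivot_term i k f) g T + psign q * gmul f (pivot_term i k g) T"
    for k
    unfolding pivot_term_eq dder_gmul[OF h] pivot_prefix_lincomb
    unfolding pivot_prefix_gmul_right[OF h] unfolding pivot_prefix_gmul_left ..
  have "pivot_range i f \<subseteq> F" "pivot_range i g \<subseteq> F" "pivot_range i (gmul f g) \<subseteq> F"
    unfolding F_def by auto
  then show "pivot i (gmul f g) T = gmul (pivot i f) g T + psign (True \<and> q) * gmul f (pivot i g) T"
    by (simp add: pivot_eq_sum[OF F] pt sum.distrib sum_distrib_left gmul_sum_left gmul_sum_right)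
qed

lemma superderivation_pivot: "superderivation (pivot i) True"
  unfolding superderivation_def using pivot_Lambda_linear pivot_shifts_parity pivot_super_leibniz by blast

lemma pivot_gbasis_nonzeroD:
  assumes nz: "pivot i (gbasis {j} :: 'k::field grass) S \<noteq> 0"
  shows "\<exists>k. j = i + 3*k \<and> S = pivot_block i k"
proof -
  have L: "(gbasis {j} :: 'k grass) \<in> Lambda" by (rule gbasis_Lambda) simp
  obtain k where "pivot_term i k (gbasis {j} :: 'k grass) S \<noteq> 0"
    using nz unfolding pivot_eq_sum[OF finite_pivot_range[OF L] order_refl]
    by (meson sum.not_neutral_contains_not_neutral)
  then obtain B where B: "dder (i + 3*k) (gbasis {j} :: 'k grass) B \<noteq> 0" "S = B \<union> pivot_block i k"
    unfolding pivot_term_eq using pivot_prefix_nonzeroD by blast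
  then have "i + 3*k \<notin> B" "insert (i + 3*k) B = {j}" unfolding dder_def by (auto split: if_splits)
  then show ?thesis using B(2) by auto
qed

section \<open>Admissible supports and their weights\<close>

definition sparse_head :: "nat \<Rightarrow> nat set \<Rightarrow> bool" where
  "sparse_head m X \<longleftrightarrow> X \<subseteq> {..<m - 2} \<or> (2 \<le> m \<and> m - 2 \<in> X \<and> X - {m - 2} \<subseteq> {..<m - 4})"

text \<open>The supports S of the monomials x_S that can occur in a(x_k) for a Lie product a of pivot
  elements.\<close>
definition admissible :: "nat \<Rightarrow> nat set \<Rightarrow> bool" where
  "admissible k S \<longleftrightarrow> (\<exists>m r X. k = m + 3*r \<and> S = X \<union> pivot_block m r \<and> sparse_head m X)"

lemma sparse_head_subset: "sparse_head m X \<Longrightarrow> X \<subseteq> {..<m - 1}"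
  unfolding sparse_head_def by auto

lemma pivot_block_bounds: "x \<in> pivot_block m r \<Longrightarrow> m \<le> x \<and> x + 2 \<le> m + 3*r"
  unfolding pivot_block_def by auto

lemma pivot_block_add: "pivot_block m (a + b) = pivot_block m a \<union> pivot_block (m + 3*a) b"
  by (induction b) (auto simp: pivot_block_Suc algebra_simps)

lemma finite_pivot_block: "finite (pivot_block m r)"
  by (induction r) (simp_all add: pivot_block_Suc)

lemma admissible_subset: "admissible k S \<Longrightarrow> S \<subseteq> {..<k - 1}"
  unfolding admissible_def by (force dest: sparse_head_subset pivot_block_bounds)

lemma admissible_finite: "admissible k S \<Longrightarrow> finite S"
  using admissible_subset finite_subset by blast

lemma admissible_pivot_block: "admissible (m + 3*r) (pivot_block m r)"
  unfolding admissible_def sparse_head_def by (intro exI[of _ m] exI[of _ r] exI[of _ "{}"]) simp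

lemma sparse_head_substitute:
  assumes X: "sparse_head m X" and j: "j \<in> X" and S: "S \<subseteq> {..<j - 1}"
  shows "sparse_head m ((X - {j}) \<union> S)"
proof -
  consider (low) "X \<subseteq> {..<m - 2}" | (high) "2 \<le> m" "m - 2 \<in> X" "X - {m - 2} \<subseteq> {..<m - 4}"
    using X unfolding sparse_head_def by blast
  then show ?thesis
  proof cases
    case low
    then show ?thesis using j S unfolding sparse_head_def by force
  next
    case high
    show ?thesis
    proof (cases "j = m - 2")
      case True
      then show ?thesis using high S unfolding sparse_head_def by force
    next
      case False
      then have "j < m - 4" using high j by auto
      then show ?thesis using high S False unfolding sparse_head_def by force
    qed
  qed
qed

lemma admissible_substitute_head:
  assumes X: "sparse_head m X" and j: "j \<in> X" and S: "S \<subseteq> {..<j - 1}"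
  shows "admissible (m + 3*r) (S \<union> (X \<union> pivot_block m r - {j}))"
proof -
  have "j \<notin> pivot_block m r" using j sparse_head_subset[OF X] pivot_block_bounds by force
  then have "S \<union> (X \<union> pivot_block m r - {j}) = ((X - {j}) \<union> S) \<union> pivot_block m r" by auto
  then show ?thesis
    unfolding admissible_def using sparse_head_substitute[OF X j S] by blast
qed

lemma admissible_substitute_block:
  assumes X: "sparse_head m X" and t: "t < r" and j: "j = m + 3*t \<or> j = m + 3*t + 1"
    and S: "S \<subseteq> {..<j - 1}"
  shows "admissible (m + 3*r) (S \<union> (X \<union> pivot_block m r - {j}))"
proof -
  define m' where "m' = m + 3 * Suc t"
  define X' where "X' = X \<union> pivot_block m t \<union> ({m + 3*t, m + 3*t + 1} - {j}) \<union> S"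
  have r: "m + 3*r = m' + 3*(r - Suc t)" unfolding m'_def using t by simp
  have "pivot_block m r = pivot_block m t \<union> {m + 3*t, m + 3*t + 1} \<union> pivot_block m' (r - Suc t)"
    using pivot_block_add[of m "Suc t" "r - Suc t"] t unfolding m'_def by (simp add: pivot_block_Suc)
  moreover have "j \<notin> X" "j \<notin> pivot_block m t" "j \<notin> pivot_block m' (r - Suc t)"
    using j sparse_head_subset[OF X] pivot_block_bounds unfolding m'_def by fastforce+
  ultimately have eq: "S \<union> (X \<union> pivot_block m r - {j}) = X' \<union> pivot_block m' (r - Suc t)"
    unfolding X'_def by auto
  have XS: "X \<subseteq> {..<m - 1}" "pivot_block m t \<subseteq> {..<m + 3*t - 1}"
    using sparse_head_subset[OF X] pivot_block_bounds by fastforce+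
  have "sparse_head m' X'"
    using j
  proof
    assume "j = m + 3*t"
    then have "m' - 2 \<in> X'" "X' - {m' - 2} \<subseteq> {..<m' - 4}"
      using XS S unfolding X'_def m'_def by auto
    then show ?thesis unfolding sparse_head_def m'_def by auto
  next
    assume "j = m + 3*t + 1"
    then have "X' \<subseteq> {..<m' - 2}" using XS S unfolding X'_def m'_def by auto
    then show ?thesis unfolding sparse_head_def by auto
  qed
  then show ?thesis unfolding admissible_def eq r by blast
qed

lemma admissible_substitute:
  assumes T: "admissible k T" and j: "j \<in> T" and S: "admissible j S"
  shows "admissible k (S \<union> (T - {j}))"
proof -
  obtain m r X where k: "k = m + 3*r" and TX: "T = X \<union> pivot_block m r" and X: "sparse_head m X"
    using T unfolding admissible_def by blast
  have S': "S \<subseteq> {..<j - 1}" by (rule admissible_subset[OF S])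
  consider "j \<in> X" | t where "t < r" "j = m + 3*t \<or> j = m + 3*t + 1"
    using j unfolding TX pivot_block_def by blast
  then show ?thesis
  proof cases
    case 1
    then show ?thesis unfolding k TX by (rule admissible_substitute_head[OF X _ S'])
  next
    case 2
    then show ?thesis unfolding k TX by (rule admissible_substitute_block[OF X _ _ S'])
  qed
qed

definition weight :: "'a::comm_ring_1 \<Rightarrow> nat \<Rightarrow> nat set \<Rightarrow> 'a" where
  "weight x k S = x ^ k - (\<Sum>i\<in>S. x ^ i)"

definition deg_eval :: "'a::comm_ring_1 \<Rightarrow> nat \<times> nat \<times> nat \<Rightarrow> 'a" where
  "deg_eval x n = (case n of (a, b, c) \<Rightarrow> of_nat a + of_nat b * x + of_nat c * x ^ 2)"

lemma deg_eval_add: "deg_eval x (deg_add d e) = deg_eval x d + deg_eval x e"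
  unfolding deg_eval_def deg_add_def by (cases d; cases e) (simp add: algebra_simps)

lemma deg_eval_unit: "i < 3 \<Longrightarrow> deg_eval x (deg_unit i) = x ^ i"
  unfolding deg_eval_def deg_unit_def by (auto simp: numeral_3_eq_3 less_Suc_eq power2_eq_square)

text \<open>The relation x^3 = x + 2 is what makes the weight of every term of the pivot element v_i
  equal to that of the generator v_i itself.\<close>
lemma weight_pivot_block:
  assumes "x ^ 3 = x + 2"
  shows "weight x (m + 3*r) (pivot_block m r) = x ^ m"
proof (induction r)
  case (Suc r)
  have "m + 3*r \<notin> pivot_block m r" "m + 3*r + 1 \<notin> pivot_block m r"
    using pivot_block_bounds by fastforce+
  then have "(\<Sum>i\<in>pivot_block m (Suc r). x ^ i) = (\<Sum>i\<in>pivot_block m r. x ^ i) + x ^ (m + 3*r) + x ^ (m + 3*r + 1)"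
    by (simp add: pivot_block_Suc finite_pivot_block algebra_simps)
  moreover have "x ^ (m + 3 * Suc r) = x ^ (m + 3*r) * x ^ 3"
    by (simp add: ac_simps flip: power_add)
  ultimately show ?case using Suc assms unfolding weight_def by (simp add: algebra_simps)
qed (simp add: weight_def)

lemma weight_substitute:
  assumes "finite S" "finite T" "j \<in> T" "S \<inter> (T - {j}) = {}"
  shows "weight x k (S \<union> (T - {j})) = weight x k T + weight x j S"
proof -
  have "(\<Sum>i\<in>S \<union> (T - {j}). x ^ i) = (\<Sum>i\<in>S. x ^ i) + (\<Sum>i\<in>T - {j}. x ^ i)"
    using assms by (intro sum.union_disjoint) auto
  moreover have "(\<Sum>i\<in>T. x ^ i) = x ^ j + (\<Sum>i\<in>T - {j}. x ^ i)"
    using assms by (simp add: sum.remove)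
  ultimately show ?thesis unfolding weight_def by (simp add: algebra_simps)
qed

text \<open>Weights are evaluated at every root of t^3 - t - 2 at once; the theorem only needs the real
  root and the complex root with positive imaginary part.\<close>
definition weighted :: "nat \<times> nat \<times> nat \<Rightarrow> nat \<Rightarrow> nat set \<Rightarrow> bool" where
  "weighted n k S \<longleftrightarrow> admissible k S \<and> (\<forall>x::complex. x ^ 3 = x + 2 \<longrightarrow> weight x k S = deg_eval x n)"

lemma weighted_pivot_block: "i < 3 \<Longrightarrow> weighted (deg_unit i) (i + 3*k) (pivot_block i k)"
  unfolding weighted_def by (simp add: admissible_pivot_block weight_pivot_block deg_eval_unit)

lemma weighted_substitute:
  assumes T: "weighted nb k T" and j: "j \<in> T" and S: "weighted na j S" and d: "S \<inter> (T - {j}) = {}"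
  shows "weighted (deg_add na nb) k (S \<union> (T - {j}))"
proof -
  have "admissible k T" "admissible j S" using T S unfolding weighted_def by auto
  then have "admissible k (S \<union> (T - {j}))" "finite S" "finite T"
    using admissible_substitute j admissible_finite by auto
  then show ?thesis
    using T S unfolding weighted_def by (simp add: weight_substitute[OF _ _ j d] deg_eval_add)
qed

lemma deg_add_commute: "deg_add d e = deg_add e d"
  unfolding deg_add_def by (auto split: prod.splits)

definition generator_weights :: "'k::field gop \<Rightarrow> nat \<times> nat \<times> nat \<Rightarrow> bool" where
  "generator_weights a n \<longleftrightarrow> (\<forall>j S. a (gbasis {j}) S \<noteq> 0 \<longrightarrow> weighted n j S)"

lemma generator_weights_pivot: "i < 3 \<Longrightarrow> generator_weights (pivot i :: 'k::field gop) (deg_unit i)"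
  unfolding generator_weights_def using pivot_gbasis_nonzeroD weighted_pivot_block by metis

lemma generator_weights_comp:
  assumes a: "Lambda_linear a" "super_leibniz a pa" "generator_weights a na"
    and b: "Lambda_linear b" "generator_weights b nb"
    and nz: "a (b (gbasis {k})) S \<noteq> 0"
  shows "weighted (deg_add na nb) k S"
proof -
  obtain T j S' where "b (gbasis {k}) T \<noteq> 0" "j \<in> T" "a (gbasis {j}) S' \<noteq> 0"
    "S' \<inter> (T - {j}) = {}" "S = S' \<union> (T - {j})"
    using super_leibniz_comp_support[OF a(1,2) b(1) nz] by blast
  then show ?thesis
    using a(3) b(2) weighted_substitute unfolding generator_weights_def by metis
qed

lemma generator_weights_superbracket:
  assumes a: "superderivation a pa" "generator_weights a na"
    and b: "superderivation b pb" "generator_weights b nb"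
  shows "generator_weights (superbracket a pa b pb) (deg_add na nb)"
  unfolding generator_weights_def
proof (intro allI impI)
  fix j S assume "superbracket a pa b pb (gbasis {j}) S \<noteq> 0"
  then consider "a (b (gbasis {j})) S \<noteq> 0" | "b (a (gbasis {j})) S \<noteq> 0"
    unfolding superbracket_eq by fastforce
  then show "weighted (deg_add na nb) j S"
  proof cases
    case 1
    then show ?thesis using generator_weights_comp a b unfolding superderivation_def by blast
  next
    case 2
    then show ?thesis
      using generator_weights_comp a b deg_add_commute unfolding superderivation_def by metis
  qed
qed

lemma generator_weights_square:
  assumes "superderivation a p" "generator_weights a n"
  shows "generator_weights (\<lambda>f. a (a f)) (deg_add n n)"
  using assms generator_weights_comp unfolding generator_weights_def superderivation_def by blast

lemma lie_prod_superderivation_weights: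
  "(a, n, p) \<in> lie_prod \<Longrightarrow> superderivation a p \<and> generator_weights a n"
proof (induction rule: lie_prod.induct)
  case (gen i)
  then show ?case using superderivation_pivot generator_weights_pivot by blast
next
  case (brk a da pa b db pb)
  then show ?case using superderivation_superbracket generator_weights_superbracket by blast
next
  case (sq a d)
  then show ?case using superderivation_square generator_weights_square by blast
qed

lemma Qcomp_nonzero_lie_prod:
  "x \<in> Qcomp n \<Longrightarrow> x f \<noteq> (\<lambda>T. 0) \<Longrightarrow> \<exists>a p. (a, n, p) \<in> lie_prod \<and> a f \<noteq> (\<lambda>T. 0)"
proof (induction rule: Qcomp.induct)
  case (add a b)
  then have "a f \<noteq> (\<lambda>T. 0) \<or> b f \<noteq> (\<lambda>T. 0)" by fastforce
  then show ?case using add by blast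
next
  case (smult a c)
  then have "a f \<noteq> (\<lambda>T. 0)" by fastforce
  then show ?case using smult by blast
qed auto

lemma Qcomp_nonzero_weighted:
  assumes "Qcomp_nonzero TYPE('k::field) n"
  shows "\<exists>k S. weighted n k S"
proof -
  obtain x f where x: "x \<in> (Qcomp n :: 'k gop set)" "f \<in> Lambda" "x f \<noteq> (\<lambda>T. 0)"
    using assms unfolding Qcomp_nonzero_def by blast
  obtain a p where a: "(a, n, p) \<in> lie_prod" "a f \<noteq> (\<lambda>T. 0)"
    using Qcomp_nonzero_lie_prod[OF x(1,3)] by blast
  have "Lambda_linear a" "super_leibniz a p" "generator_weights a n"
    using lie_prod_superderivation_weights[OF a(1)] unfolding superderivation_def by auto
  moreover obtain j S where "a (gbasis {j}) S \<noteq> 0"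
    using super_leibniz_nonzero_generator[OF calculation(1,2) x(2) a(2)] by blast
  ultimately have "weighted n j S" unfolding generator_weights_def by blast
  then show ?thesis by blast
qed

section \<open>The roots of t^3 - t - 2\<close>

lemma cubic_real_root_gt_1:
  fixes t :: real
  assumes "t ^ 3 = t + 2"
  shows "t > 1"
proof (rule ccontr)
  assume "\<not> t > 1"
  have "t * (t\<^sup>2 - 1) \<le> 1"
  proof (cases "t \<le> -1")
    case True
    then have "1 \<le> (-t)\<^sup>2" by (intro one_le_power) linarith
    then show ?thesis using True by (simp add: mult_nonpos_nonneg order_trans[of _ 0])
  next
    case False
    then have "\<bar>t\<bar> \<le> 1" using \<open>\<not> t > 1\<close> by auto
    moreover have "\<bar>t\<^sup>2 - 1\<bar> \<le> 1" using \<open>\<bar>t\<bar> \<le> 1\<close> abs_le_square_iff[of t 1] by auto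
    ultimately have "\<bar>t * (t\<^sup>2 - 1)\<bar> \<le> 1 * 1" unfolding abs_mult by (intro mult_mono) auto
    then show ?thesis by simp
  qed
  then show False using assms by (simp add: power2_eq_square power3_eq_cube algebra_simps)
qed

lemma cubic_real_root_unique:
  fixes s t :: real
  assumes "s ^ 3 = s + 2" "t ^ 3 = t + 2"
  shows "s = t"
proof -
  have "s > 1" "t > 1" using cubic_real_root_gt_1 assms by auto
  then have "s\<^sup>2 + s * t + t\<^sup>2 - 1 > 0" by (smt (verit) less_1_mult zero_le_power2)
  moreover have "(s - t) * (s\<^sup>2 + s * t + t\<^sup>2 - 1) = 0"
    using assms by (simp add: algebra_simps power2_eq_square power3_eq_cube)
  ultimately show ?thesis by simp
qed

lemma lam_cubic: "lam ^ 3 = lam + 2"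
  and lam_bounds: "152/100 \<le> lam" "lam \<le> 153/100"
proof -
  have "\<exists>t::real. 152/100 \<le> t \<and> t \<le> 153/100 \<and> t ^ 3 - t - 2 = 0"
    by (rule IVT'[of "\<lambda>x::real. x ^ 3 - x - 2"]) (auto intro!: continuous_intros simp: power3_eq_cube)
  then obtain t :: real where t: "152/100 \<le> t" "t \<le> 153/100" "t ^ 3 - t - 2 = 0" by blast
  have "lam = t"
    unfolding lam_def using t(3) cubic_real_root_unique by (intro the_equality) auto
  then show "lam ^ 3 = lam + 2" "152/100 \<le> lam" "lam \<le> 153/100" using t by auto
qed

lemma cubic_factor:
  fixes z :: complex
  shows "z ^ 3 - z - 2 = (z - of_real lam) * (z\<^sup>2 + of_real lam * z + (of_real lam)\<^sup>2 - 1)"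
proof -
  have "(of_real lam :: complex) ^ 3 = of_real lam + 2" using lam_cubic by (metis of_real_add of_real_numeral of_real_power)
  then show ?thesis by (simp add: algebra_simps power2_eq_square power3_eq_cube)
qed

lemma lam_discriminant_pos: "3 * lam\<^sup>2 / 4 - 1 > 0"
  using power_mono[OF lam_bounds(1), of 2] by (simp add: power2_eq_square)

lemma upper_root_iff:
  "z ^ 3 - z - 2 = 0 \<and> Im z > 0 \<longleftrightarrow> z = Complex (- lam / 2) (sqrt (3 * lam\<^sup>2 / 4 - 1))"
proof -
  define r where "r = sqrt (3 * lam\<^sup>2 / 4 - 1)"
  have r: "r > 0" "r\<^sup>2 = 3 * lam\<^sup>2 / 4 - 1" unfolding r_def using lam_discriminant_pos by simp_all
  have quadratic: "z\<^sup>2 + of_real lam * z + (of_real lam)\<^sup>2 - 1 = 0 \<longleftrightarrow>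
      (Re z)\<^sup>2 - (Im z)\<^sup>2 + lam * Re z + lam\<^sup>2 - 1 = 0 \<and> (2 * Re z + lam) * Im z = 0" for z
    by (simp add: complex_eq_iff power2_eq_square algebra_simps)
  have "z = Complex (- lam / 2) r" if z: "z ^ 3 - z - 2 = 0" "Im z > 0"
  proof -
    have "z \<noteq> of_real lam" using z(2) by auto
    then have "z\<^sup>2 + of_real lam * z + (of_real lam)\<^sup>2 - 1 = 0" using z(1) unfolding cubic_factor by simp
    then have "(Re z)\<^sup>2 - (Im z)\<^sup>2 + lam * Re z + lam\<^sup>2 - 1 = 0" "2 * Re z + lam = 0"
      using z(2) unfolding quadratic by auto
    then have re: "Re z = - lam / 2" and "(Im z)\<^sup>2 = (Re z)\<^sup>2 + lam * Re z + lam\<^sup>2 - 1"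
      by (simp_all add: field_simps)
    then have "(Im z)\<^sup>2 = r\<^sup>2" using r(2) unfolding re by (simp add: power2_eq_square field_simps)
    then have "Im z = r" using z(2) r(1) by (simp add: power2_eq_iff)
    with re show "z = Complex (- lam / 2) r" by (simp add: complex_eq_iff)
  qed
  moreover have "Complex (- lam / 2) r ^ 3 - Complex (- lam / 2) r - 2 = 0"
  proof -
    have "(Complex (- lam / 2) r)\<^sup>2 + of_real lam * Complex (- lam / 2) r + (of_real lam)\<^sup>2 - 1 = 0"
      unfolding quadratic using r(2) by (simp add: power2_eq_square algebra_simps)
    then show ?thesis unfolding cubic_factor by simp
  qed
  ultimately show ?thesis using r(1) unfolding r_def[symmetric] by auto
qed

lemma mu_eq: "mu = Complex (- lam / 2) (sqrt (3 * lam\<^sup>2 / 4 - 1))"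
  unfolding mu_def upper_root_iff by simp

lemma mu_cubic: "mu ^ 3 = mu + 2"
  using upper_root_iff[of mu] mu_eq by (simp add: algebra_simps)

lemma lam_gt_1: "lam > 1"
  using lam_bounds(1) by simp

lemma cmod_mu_sq: "(cmod mu)\<^sup>2 = 2 / lam"
proof -
  have "(cmod mu)\<^sup>2 = lam\<^sup>2 - 1"
    unfolding mu_eq cmod_def using lam_discriminant_pos by (simp add: power2_eq_square algebra_simps)
  also have "\<dots> = 2 / lam"
    using lam_cubic lam_gt_1 by (simp add: field_simps power2_eq_square power3_eq_cube)
  finally show ?thesis .
qed

lemma lam_numeric: "lam\<^sup>2 \<le> lam + 1" "8 / 7 \<le> lam\<^sup>2 * (lam - 1)"
proof -
  have "lam\<^sup>2 \<le> (153/100)\<^sup>2" "(152/100)\<^sup>2 \<le> lam\<^sup>2"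
    using lam_bounds by (intro power_mono; simp)+
  then show "lam\<^sup>2 \<le> lam + 1" "8 / 7 \<le> lam\<^sup>2 * (lam - 1)"
    using lam_bounds mult_mono[of "(152/100)\<^sup>2" "lam\<^sup>2" "52/100" "lam - 1"] by (simp_all add: power2_eq_square)
qed

lemma cmod_mu_numeric: "1 < cmod mu" "(cmod mu)\<^sup>2 \<le> cmod mu + 1" "1 / 6 < (cmod mu)\<^sup>2 * (cmod mu - 1)"
proof -
  have sq: "13 / 10 \<le> (cmod mu)\<^sup>2" "(cmod mu)\<^sup>2 \<le> 4 / 3"
    unfolding cmod_mu_sq using lam_bounds by (simp_all add: field_simps)
  have "(114/100)\<^sup>2 \<le> (cmod mu)\<^sup>2" using sq(1) by (simp add: power2_eq_square)
  then have ge: "114/100 \<le> cmod mu" by (rule power2_le_imp_le) simp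
  then show "1 < cmod mu" by simp
  show "(cmod mu)\<^sup>2 \<le> cmod mu + 1" using sq(2) ge by simp
  show "1 / 6 < (cmod mu)\<^sup>2 * (cmod mu - 1)"
    using mult_mono[OF sq(1), of "14/100" "cmod mu - 1"] ge by simp
qed

lemma lam_powr_inv_sigma: "lam powr (1 / sigma) = cmod mu"
proof -
  have "1 / sigma = log lam (cmod mu)" unfolding sigma_def log_def by simp
  moreover have "lam powr log lam (cmod mu) = cmod mu"
    using lam_gt_1 cmod_mu_numeric(1) by (intro powr_log_cancel) auto
  ultimately show ?thesis by simp
qed

text \<open>Equivalent to |mu|^3 \<le> lam, i.e. (2/lam)^3 \<le> lam^2, i.e. lam^5 \<ge> 8.\<close>
lemma inv_sigma_bounds: "0 < 1 / sigma" "1 / sigma \<le> 1 / 3"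
proof -
  have "8 \<le> lam ^ 5"
  proof -
    have "lam ^ 5 = lam\<^sup>2 * (lam + 2)"
      unfolding lam_cubic[symmetric] by (simp flip: power_add)
    moreover have "(152/100)\<^sup>2 \<le> lam\<^sup>2" using lam_bounds by (intro power_mono) simp_all
    ultimately show ?thesis using lam_bounds mult_mono[of "(152/100)\<^sup>2" "lam\<^sup>2" "352/100" "lam + 2"]
      by (simp add: power2_eq_square)
  qed
  have "(cmod mu ^ 3)\<^sup>2 = ((cmod mu)\<^sup>2) ^ 3" by (simp only: power_mult[symmetric]) simp
  also have "\<dots> = 8 / lam ^ 3" unfolding cmod_mu_sq by (simp add: power_divide)
  also have "\<dots> \<le> lam\<^sup>2"
    using \<open>8 \<le> lam ^ 5\<close> lam_gt_1 by (simp add: divide_le_eq flip: power_add)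
  finally have "(cmod mu ^ 3)\<^sup>2 \<le> lam\<^sup>2" .
  then have "cmod mu ^ 3 \<le> lam" by (rule power2_le_imp_le) (use lam_gt_1 in simp)
  then have "ln (cmod mu ^ 3) \<le> ln lam"
    using cmod_mu_numeric(1) lam_gt_1 by (subst ln_le_cancel_iff) auto
  then have "3 * ln (cmod mu) \<le> ln lam"
    using cmod_mu_numeric(1) by (simp add: ln_realpow)
  moreover have "ln lam > 0" "ln (cmod mu) > 0" using lam_gt_1 cmod_mu_numeric(1) by (simp_all add: ln_gt_zero)
  ultimately have "0 < ln (cmod mu) / ln lam" "ln (cmod mu) / ln lam \<le> 1 / 3"
    by (simp_all add: field_simps)
  moreover have "1 / sigma = ln (cmod mu) / ln lam" unfolding sigma_def log_def by simp
  ultimately show "0 < 1 / sigma" "1 / sigma \<le> 1 / 3" by simp_all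
qed

section \<open>Estimates\<close>

lemma sum_power_below_le:
  fixes x :: real
  assumes x: "x > 1" and X: "X \<subseteq> {..<m - d}"
  shows "(\<Sum>i\<in>X. x ^ i) \<le> x ^ m / (x ^ d * (x - 1))"
proof (cases "d \<le> m")
  case True
  have "(\<Sum>i\<in>X. x ^ i) \<le> (\<Sum>i<m - d. x ^ i)"
    using X x by (intro sum_mono2) auto
  also have "\<dots> = (x ^ (m - d) - 1) / (x - 1)"
    using x by (simp add: sum_gp_strict field_simps)
  also have "\<dots> \<le> x ^ (m - d) / (x - 1)" using x by (simp add: divide_right_mono)
  also have "x ^ (m - d) = x ^ m / x ^ d" using True x by (simp add: power_diff)
  finally show ?thesis by simp
next
  case False
  then show ?thesis using X x by simp
qed

text \<open>For 1 < x \<le> (1 + sqrt 5) / 2 the head of an admissible set weighs at most as much as a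
  full geometric tail below m - 2.\<close>
lemma sum_power_sparse_head_le:
  fixes x :: real
  assumes x: "x > 1" "x\<^sup>2 \<le> x + 1" and X: "sparse_head m X"
  shows "(\<Sum>i\<in>X. x ^ i) \<le> x ^ m / (x\<^sup>2 * (x - 1))"
  using X unfolding sparse_head_def
proof (elim disjE conjE)
  assume "X \<subseteq> {..<m - 2}"
  then show ?thesis by (rule sum_power_below_le[OF x(1)])
next
  assume m: "2 \<le> m" "m - 2 \<in> X" "X - {m - 2} \<subseteq> {..<m - 4}"
  have "finite X" using m(3) finite_subset[of "X - {m - 2}"] by auto
  then have "(\<Sum>i\<in>X. x ^ i) = x ^ (m - 2) + (\<Sum>i\<in>X - {m - 2}. x ^ i)"
    using m(2) by (simp add: sum.remove)
  also have "\<dots> \<le> x ^ m / x\<^sup>2 + x ^ m / (x ^ 4 * (x - 1))"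
    using sum_power_below_le[OF x(1) m(3)] m(1) x(1) by (simp add: power_diff)
  also have "\<dots> \<le> x ^ m / (x\<^sup>2 * (x - 1))"
  proof -
    have "x\<^sup>2 * (x - 1) + 1 \<le> x\<^sup>2"
      using mult_left_mono[of "x\<^sup>2" "x + 1" "x - 1"] x by (simp add: algebra_simps power2_eq_square)
    then have "x ^ m * (x\<^sup>2 * (x - 1) + 1) / (x ^ 4 * (x - 1)) \<le> x ^ m * x\<^sup>2 / (x ^ 4 * (x - 1))"
      using x(1) by (intro divide_right_mono mult_left_mono) simp_all
    moreover have "x ^ m / x\<^sup>2 + x ^ m / (x ^ 4 * (x - 1)) = x ^ m * (x\<^sup>2 * (x - 1) + 1) / (x ^ 4 * (x - 1))"
      "x ^ m / (x\<^sup>2 * (x - 1)) = x ^ m * x\<^sup>2 / (x ^ 4 * (x - 1))"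
      using x(1) by (simp_all add: field_simps power2_eq_square power4_eq_xxxx)
    ultimately show ?thesis by simp
  qed
  finally show ?thesis .
qed

lemma weighted_deg_eval:
  assumes "weighted n k S"
  obtains m X where "sparse_head m X" "\<And>x::complex. x ^ 3 = x + 2 \<Longrightarrow> deg_eval x n = x ^ m - (\<Sum>i\<in>X. x ^ i)"
proof -
  obtain m r X where k: "k = m + 3*r" and S: "S = X \<union> pivot_block m r" and X: "sparse_head m X"
    using assms unfolding weighted_def admissible_def by blast
  have "finite X" "X \<inter> pivot_block m r = {}"
    using sparse_head_subset[OF X] pivot_block_bounds finite_subset by fastforce+
  then have "weight x k S = x ^ m - (\<Sum>i\<in>X. x ^ i)" if "x ^ 3 = x + 2" for x :: complex
    using weight_pivot_block[OF that, of m r] unfolding k S weight_def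
    by (simp add: sum.union_disjoint finite_pivot_block algebra_simps)
  then show ?thesis using that[OF X] assms unfolding weighted_def by simp
qed

lemma lam_head_lower:
  assumes "sparse_head m X"
  shows "lam ^ m / 8 \<le> lam ^ m - (\<Sum>i\<in>X. lam ^ i)"
proof -
  have "(\<Sum>i\<in>X. lam ^ i) \<le> lam ^ m / (lam\<^sup>2 * (lam - 1))"
    using sum_power_sparse_head_le[OF lam_gt_1 lam_numeric(1) assms] .
  also have "\<dots> \<le> lam ^ m / (8 / 7)"
    using lam_numeric(2) lam_gt_1 by (intro divide_left_mono) simp_all
  finally show ?thesis by simp
qed

lemma mu_head_upper:
  assumes "sparse_head m X"
  shows "cmod (mu ^ m - (\<Sum>i\<in>X. mu ^ i)) < 7 * cmod mu ^ m"
proof -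
  have "cmod (mu ^ m - (\<Sum>i\<in>X. mu ^ i)) \<le> cmod (mu ^ m) + cmod (\<Sum>i\<in>X. mu ^ i)"
    by (rule norm_triangle_ineq4)
  also have "cmod (\<Sum>i\<in>X. mu ^ i) \<le> (\<Sum>i\<in>X. cmod mu ^ i)"
    using norm_sum[of "\<lambda>i. mu ^ i" X] by (simp add: norm_power)
  also have "(\<Sum>i\<in>X. cmod mu ^ i) \<le> cmod mu ^ m / ((cmod mu)\<^sup>2 * (cmod mu - 1))"
    using sum_power_sparse_head_le[OF cmod_mu_numeric(1,2) assms] .
  also have "\<dots> < cmod mu ^ m / (1 / 6)"
  proof (rule divide_strict_left_mono)
    show "0 < cmod mu ^ m" using cmod_mu_numeric(1) by (intro zero_less_power) linarith
  qed (use cmod_mu_numeric(1,3) in simp_all)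
  finally show ?thesis by (simp add: norm_power)
qed

lemma lam_power_powr_inv_sigma: "(lam ^ m / 8) powr (1 / sigma) \<ge> cmod mu ^ m / 2"
proof -
  have "(2 :: real) powr 3 = 8" by (simp add: powr_numeral)
  then have "(8 :: real) powr (1 / 3) = 2 powr (3 * (1 / 3))" by (simp add: powr_powr)
  then have "(8 :: real) powr (1 / 3) = 2" by simp
  moreover have "(8 :: real) powr (1 / sigma) \<le> 8 powr (1 / 3)"
    by (rule powr_mono[OF inv_sigma_bounds(2)]) simp
  ultimately have "(8 :: real) powr (1 / sigma) \<le> 2" by simp
  moreover have "(lam ^ m) powr (1 / sigma) = cmod mu ^ m"
    using lam_gt_1 by (simp add: powr_realpow[symmetric] powr_powr lam_powr_inv_sigma[symmetric] mult.commute)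
  moreover have "(lam ^ m / 8) powr (1 / sigma) = (lam ^ m) powr (1 / sigma) / 8 powr (1 / sigma)"
    using lam_gt_1 by (simp add: powr_divide)
  moreover have "0 < (8 :: real) powr (1 / sigma)" by simp
  ultimately show ?thesis using divide_left_mono[of "8 powr (1 / sigma)" 2 "cmod mu ^ m"] by simp
qed

lemma sparse_head_root_bound:
  assumes "sparse_head m X"
  shows "cmod (mu ^ m - (\<Sum>i\<in>X. mu ^ i)) < 14 * (lam ^ m - (\<Sum>i\<in>X. lam ^ i)) powr (1 / sigma)"
proof -
  have "cmod (mu ^ m - (\<Sum>i\<in>X. mu ^ i)) < 7 * cmod mu ^ m"
    by (rule mu_head_upper[OF assms])
  also have "\<dots> \<le> 14 * (lam ^ m / 8) powr (1 / sigma)"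
    using lam_power_powr_inv_sigma[of m] by linarith
  also have "\<dots> \<le> 14 * (lam ^ m - (\<Sum>i\<in>X. lam ^ i)) powr (1 / sigma)"
    using lam_head_lower[OF assms] inv_sigma_bounds(1) lam_gt_1 by (simp add: powr_mono2)
  finally show ?thesis .
qed

theorem theorem8p5:
  fixes n1 n2 n3 :: nat
  assumes "Qcomp_nonzero TYPE('k::field) (n1, n2, n3)"
  shows "sqrt ((Re (of_nat n1 + of_nat n2 * mu + of_nat n3 * mu ^ 2))\<^sup>2
             + (Im (of_nat n1 + of_nat n2 * mu + of_nat n3 * mu ^ 2))\<^sup>2)
         < 14 * (real n1 + real n2 * lam + real n3 * lam ^ 2) powr (1 / sigma)"
proof -
  obtain k S where "weighted (n1, n2, n3) k S" using Qcomp_nonzero_weighted[OF assms] by blast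
  then obtain m X where X: "sparse_head m X"
    and eval: "\<And>x::complex. x ^ 3 = x + 2 \<Longrightarrow> deg_eval x (n1, n2, n3) = x ^ m - (\<Sum>i\<in>X. x ^ i)"
    by (rule weighted_deg_eval) auto
  have "of_real (deg_eval lam (n1, n2, n3)) = (of_real (lam ^ m - (\<Sum>i\<in>X. lam ^ i)) :: complex)"
    using eval[of "of_real lam"] lam_cubic by (simp add: deg_eval_def flip: of_real_power)
  then have "deg_eval lam (n1, n2, n3) = lam ^ m - (\<Sum>i\<in>X. lam ^ i)" by (simp only: of_real_eq_iff)
  moreover have "deg_eval mu (n1, n2, n3) = mu ^ m - (\<Sum>i\<in>X. mu ^ i)" using eval mu_cubic by simp
  ultimately show ?thesis using sparse_head_root_bound[OF X] by (simp add: deg_eval_def cmod_def)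
qed

end
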